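(* Let $k$ be an algebraically closed field, $Q$ a finite acyclic quiver, and $M = (M_v, \varphi_a)_{v\in Q_0, a \in Q_1}$ a representation of $Q$ over $k$ of total dimension $n$ which is a brick, and let $w \in Q_0$ with $\dim_k M_w = m > 1$. Let $Q'$ be the quiver with $Q'_0 = Q_0 \cup \{w'\}$ ($w'$ a new vertex), $Q'_1 = Q_1 \cup \{e'\}$, where $s(e') = w'$, $t(e') = w$, and all arrows of $Q$ keep their source and target. Fix a basis of $\bigoplus_v M_v$ in which the first $m$ basis vectors span $M_w$, and let $f: kQ \to M_n(k)$ be the resulting homomorphism giving the action of $kQ$ on $M$. Then the $k$-algebra homomorphism $g: kQ' \to M_{n+1}(k\langle x_1,\dots,x_{m-1}\rangle)$ determined by $$g(a) = \begin{pmatrix} f(a) & 0 \\ 0 & 0\end{pmatrix} \ (a \in kQ),\quad g(e_{w'}) = \begin{pmatrix} 0 & 0 \\ 0 & 1 \end{pmatrix},\quad g(e') = \begin{pmatrix} 0 & X \\ 0 & 0 \end{pmatrix},$$ where $X = (1, x_1, \dots, x_{m-1}, 0, \dots, 0)^T$ is a column of length $n$, is a ring epimorphism.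
   Context: A representation is a brick if its endomorphism ring is $k$. $k\langle x_1,\dots,x_{m-1}\rangle$ is the free associative $k$-algebra. A ring homomorphism $\varphi: R \to S$ is a ring epimorphism if for any two ring homomorphisms $\varrho_1, \varrho_2: S \to T$ with $\varrho_1\varphi = \varrho_2\varphi$ one has $\varrho_1 = \varrho_2$. Arrows act by matrices supported in the (rows of the target vertex, columns of the source vertex) block. *)

theory Defs
  imports "HOL-Library.Poly_Mapping" "HOL-Computational_Algebra.Polynomial"
          "HOL-Algebra.Ring" "Jordan_Normal_Form.Matrix"
begin

definition alg_closed :: "'k::field itself \<Rightarrow> bool" where
  "alg_closed _ \<longleftrightarrow> (\<forall>p::'k poly. degree p \<ge> 1 \<longrightarrow> (\<exists>x. poly p x = 0))"

text \<open>Words over the alphabet 'x, with concatenation as (non-commutative) monoid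
  operation; the free algebra is the algebra of finitely supported k-valued
  functions on words with convolution product.\<close>

datatype 'x word = Word "'x list"

instantiation word :: (type) monoid_add
begin
definition zero_word_def: "0 = Word []"
fun plus_word :: "'a word \<Rightarrow> 'a word \<Rightarrow> 'a word" where
  "plus_word (Word a) (Word b) = Word (a @ b)"
instance
proof
  fix a b c :: "'a word"
  show "a + b + c = a + (b + c)" by (cases a; cases b; cases c) auto
  show "0 + a = a" by (cases a) (auto simp: zero_word_def)
  show "a + 0 = a" by (cases a) (auto simp: zero_word_def)
qed
end

type_synonym ('x, 'k) freealg = "'x word \<Rightarrow>\<^sub>0 'k"

definition fvar :: "'x \<Rightarrow> ('x, 'k::ring_1) freealg" where
  "fvar x = Poly_Mapping.single (Word [x]) 1"

definition fconst :: "'k::ring_1 \<Rightarrow> ('x, 'k) freealg" where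
  "fconst c = Poly_Mapping.single 0 c"

text \<open>A path is a pair (v, as): v is its source vertex and as is a list of arrows
  written in composition order (the head of the list is the last arrow traversed),
  so that paths compose like functions.  (v, []) is the trivial path e_v.\<close>

fun chain :: "('a \<Rightarrow> 'v) \<Rightarrow> ('a \<Rightarrow> 'v) \<Rightarrow> 'a list \<Rightarrow> bool" where
  "chain s t [] = True"
| "chain s t [a] = True"
| "chain s t (a # b # as) = (s a = t b \<and> chain s t (b # as))"

definition is_path :: "'v set \<Rightarrow> 'a set \<Rightarrow> ('a \<Rightarrow> 'v) \<Rightarrow> ('a \<Rightarrow> 'v) \<Rightarrow> 'v \<times> 'a list \<Rightarrow> bool" where
  "is_path V A s t p \<longleftrightarrow> fst p \<in> V \<and> set (snd p) \<subseteq> A \<and> chain s t (snd p)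
     \<and> (snd p \<noteq> [] \<longrightarrow> s (last (snd p)) = fst p)"

definition path_source :: "'v \<times> 'a list \<Rightarrow> 'v" where
  "path_source p = fst p"

definition path_target :: "('a \<Rightarrow> 'v) \<Rightarrow> 'v \<times> 'a list \<Rightarrow> 'v" where
  "path_target t p = (if snd p = [] then fst p else t (hd (snd p)))"

definition finite_quiver :: "'v set \<Rightarrow> 'a set \<Rightarrow> ('a \<Rightarrow> 'v) \<Rightarrow> ('a \<Rightarrow> 'v) \<Rightarrow> bool" where
  "finite_quiver V A s t \<longleftrightarrow> finite V \<and> finite A \<and> (\<forall>a\<in>A. s a \<in> V \<and> t a \<in> V)"

definition acyclic_quiver :: "'v set \<Rightarrow> 'a set \<Rightarrow> ('a \<Rightarrow> 'v) \<Rightarrow> ('a \<Rightarrow> 'v) \<Rightarrow> bool" where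
  "acyclic_quiver V A s t \<longleftrightarrow>
     (\<forall>p. is_path V A s t p \<and> snd p \<noteq> [] \<longrightarrow> path_target t p \<noteq> path_source p)"

definition path_comp :: "('a \<Rightarrow> 'v) \<Rightarrow> 'v \<times> 'a list \<Rightarrow> 'v \<times> 'a list \<Rightarrow> ('v \<times> 'a list) option" where
  "path_comp t p q = (if path_source p = path_target t q then Some (fst q, snd p @ snd q) else None)"

definition supp_fun :: "('p \<Rightarrow> 'k::zero) \<Rightarrow> 'p set" where
  "supp_fun c = {p. c p \<noteq> 0}"

definition path_algebra ::
  "'k::field itself \<Rightarrow> 'v set \<Rightarrow> 'a set \<Rightarrow> ('a \<Rightarrow> 'v) \<Rightarrow> ('a \<Rightarrow> 'v) \<Rightarrow> ('v \<times> 'a list \<Rightarrow> 'k) ring" where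
  "path_algebra _ V A s t = \<lparr>
     carrier = {c. finite (supp_fun c) \<and> supp_fun c \<subseteq> {p. is_path V A s t p}},
     mult = (\<lambda>c d r. \<Sum>p\<in>supp_fun c. \<Sum>q\<in>supp_fun d.
                 if path_comp t p q = Some r then c p * d q else 0),
     one = (\<lambda>p. if snd p = [] \<and> fst p \<in> V then 1 else 0),
     zero = (\<lambda>_. 0),
     add = (\<lambda>c d p. c p + d p) \<rparr>"

text \<open>A representation M of (V, A, s, t) of total dimension n, in a fixed basis:
  blk i is the vertex whose space M_v contains the i-th basis vector (i < n), and
  phi a is the n x n matrix of the arrow a, supported in the block
  (rows of t a, columns of s a).\<close>
definition matrix_rep ::
  "'v set \<Rightarrow> 'a set \<Rightarrow> ('a \<Rightarrow> 'v) \<Rightarrow> ('a \<Rightarrow> 'v) \<Rightarrow> nat \<Rightarrow> (nat \<Rightarrow> 'v) \<Rightarrow> ('a \<Rightarrow> 'k::field mat) \<Rightarrow> bool" where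
  "matrix_rep V A s t n blk phi \<longleftrightarrow>
     (\<forall>i<n. blk i \<in> V) \<and>
     (\<forall>a\<in>A. phi a \<in> carrier_mat n n \<and>
        (\<forall>i<n. \<forall>j<n. (blk i \<noteq> t a \<or> blk j \<noteq> s a) \<longrightarrow> phi a $$ (i, j) = 0))"

definition rep_endo ::
  "'a set \<Rightarrow> nat \<Rightarrow> (nat \<Rightarrow> 'v) \<Rightarrow> ('a \<Rightarrow> 'k::field mat) \<Rightarrow> 'k mat \<Rightarrow> bool" where
  "rep_endo A n blk phi E \<longleftrightarrow> E \<in> carrier_mat n n \<and>
     (\<forall>i<n. \<forall>j<n. blk i \<noteq> blk j \<longrightarrow> E $$ (i, j) = 0) \<and>
     (\<forall>a\<in>A. E * phi a = phi a * E)"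

definition is_brick ::
  "'a set \<Rightarrow> nat \<Rightarrow> (nat \<Rightarrow> 'v) \<Rightarrow> ('a \<Rightarrow> 'k::field mat) \<Rightarrow> bool" where
  "is_brick A n blk phi \<longleftrightarrow> (\<forall>E. rep_endo A n blk phi E \<longrightarrow> (\<exists>c. E = c \<cdot>\<^sub>m 1\<^sub>m n))"

definition embed_mat :: "nat \<Rightarrow> 'k::ring_1 mat \<Rightarrow> ('x, 'k) freealg mat" where
  "embed_mat n B = mat (n+1) (n+1) (\<lambda>(i,j). if i < n \<and> j < n then fconst (B $$ (i,j)) else 0)"

definition Xcol :: "nat \<Rightarrow> nat \<Rightarrow> (nat \<Rightarrow> 'x) \<Rightarrow> nat \<Rightarrow> ('x, 'k::ring_1) freealg" where
  "Xcol n m xv i = (if i = 0 then 1 else if i < m then fvar (xv i) else 0)"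

definition g_arrow ::
  "nat \<Rightarrow> nat \<Rightarrow> (nat \<Rightarrow> 'x) \<Rightarrow> ('a \<Rightarrow> 'k::ring_1 mat) \<Rightarrow> 'a \<Rightarrow> 'a \<Rightarrow> ('x, 'k) freealg mat" where
  "g_arrow n m xv phi e' a = (if a = e'
      then mat (n+1) (n+1) (\<lambda>(i,j). if i < n \<and> j = n then Xcol n m xv i else 0)
      else embed_mat n (phi a))"

definition g_vertex ::
  "nat \<Rightarrow> (nat \<Rightarrow> 'v) \<Rightarrow> 'v \<Rightarrow> 'v \<Rightarrow> ('x, 'k::ring_1) freealg mat" where
  "g_vertex n blk w' v = (if v = w'
      then mat (n+1) (n+1) (\<lambda>(i,j). if i = n \<and> j = n then 1 else 0)
      else mat (n+1) (n+1) (\<lambda>(i,j). if i < n \<and> i = j \<and> blk i = v then 1 else 0))"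

definition g_path ::
  "nat \<Rightarrow> nat \<Rightarrow> (nat \<Rightarrow> 'x) \<Rightarrow> (nat \<Rightarrow> 'v) \<Rightarrow> ('a \<Rightarrow> 'k::ring_1 mat) \<Rightarrow> 'v \<Rightarrow> 'a
     \<Rightarrow> 'v \<times> 'a list \<Rightarrow> ('x, 'k) freealg mat" where
  "g_path n m xv blk phi w' e' p = (if snd p = [] then g_vertex n blk w' (fst p)
      else foldr (\<lambda>a B. g_arrow n m xv phi e' a * B) (snd p) (1\<^sub>m (n+1)))"

definition g_hom ::
  "nat \<Rightarrow> nat \<Rightarrow> (nat \<Rightarrow> 'x) \<Rightarrow> (nat \<Rightarrow> 'v) \<Rightarrow> ('a \<Rightarrow> 'k::ring_1 mat) \<Rightarrow> 'v \<Rightarrow> 'a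
     \<Rightarrow> ('v \<times> 'a list \<Rightarrow> 'k) \<Rightarrow> ('x, 'k) freealg mat" where
  "g_hom n m xv blk phi w' e' c = mat (n+1) (n+1) (\<lambda>(i,j).
      \<Sum>p\<in>{p. c p \<noteq> 0}. fconst (c p) * (g_path n m xv blk phi w' e' p $$ (i,j)))"

text \<open>The target rings T range over all (unital) rings whose carrier lives in the
  type 'c; the theorem is stated schematically in 'c, hence for all rings.\<close>
definition ring_epi ::
  "('a, 'm) ring_scheme \<Rightarrow> ('b, 'n) ring_scheme \<Rightarrow> ('a \<Rightarrow> 'b) \<Rightarrow> 'c itself \<Rightarrow> bool" where
  "ring_epi R S \<phi> _ \<longleftrightarrow> \<phi> \<in> ring_hom R S \<and>
     (\<forall>(T :: 'c ring) \<rho>1 \<rho>2. ring T \<longrightarrow> \<rho>1 \<in> ring_hom S T \<longrightarrow> \<rho>2 \<in> ring_hom S T \<longrightarrow>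
        (\<forall>x\<in>carrier R. \<rho>1 (\<phi> x) = \<rho>2 (\<phi> x)) \<longrightarrow> (\<forall>y\<in>carrier S. \<rho>1 y = \<rho>2 y))"

end

theory Submission
  imports Defs "HOL-Library.Function_Algebras"
begin

text \<open>
  Paths are mapped to matrices that multiply like the paths themselves, so the linear
  extension \<open>g\<close> turns the convolution product of \<open>kQ'\<close> into matrix multiplication.

  Let \<open>\<rho>1\<close> and \<open>\<rho>2\<close> agree on the image of \<open>g\<close>, and write \<open>E\<^sub>i\<^sub>j\<close> for the matrix units.
  The elements \<open>Y\<^sub>p\<^sub>q = \<rho>1 E\<^sub>0\<^sub>p \<cdot> \<rho>2 E\<^sub>q\<^sub>0\<close> satisfy, with coefficients in \<open>k\<close>, the
  linear equations expressing that \<open>(Y\<^sub>p\<^sub>q)\<close> commutes with the image of \<open>kQ\<close> in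
  \<open>M\<^sub>n(k)\<close>. Over \<open>k\<close> these equations force a scalar matrix because \<open>M\<close> is a brick, so
  \<open>Y\<^sub>k\<^sub>l = \<delta>\<^sub>k\<^sub>l Y\<^sub>0\<^sub>0\<close> is a \<open>k\<close>-linear consequence of the equations and holds for \<open>Y\<close>
  as well. Hence \<open>\<rho>1\<close> and \<open>\<rho>2\<close> agree on \<open>E\<^sub>i\<^sub>j\<close> for \<open>i, j < n\<close>. The new arrow gives
  \<open>E\<^sub>0\<^sub>n = E\<^sub>0\<^sub>0 X\<close>, Isbell's zig-zag through the idempotent \<open>E\<^sub>n\<^sub>n\<close> of the new vertex
  gives \<open>E\<^sub>n\<^sub>0\<close>, and the variables \<open>x\<^sub>i\<close> are the entries of \<open>E\<^sub>i\<^sub>i X\<close>. These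
  single-entry matrices generate the whole matrix ring as a ring, so \<open>\<rho>1 = \<rho>2\<close>.
\<close>

lemma fconst_add: "fconst (a + b) = (fconst a + fconst b :: ('x, 'k::ring_1) freealg)"
  by (simp add: fconst_def single_add)

lemma fconst_mult: "fconst (a * b) = (fconst a * fconst b :: ('x, 'k::ring_1) freealg)"
  by (simp add: fconst_def mult_single)

lemma fconst_one [simp]: "fconst 1 = 1"
  by (simp add: fconst_def)

lemma fconst_zero [simp]: "fconst 0 = 0"
  by (simp add: fconst_def)

lemma fconst_eq_zero_iff [simp]: "fconst c = 0 \<longleftrightarrow> c = 0"
  by (metis fconst_def lookup_single_eq single_zero)

lemma fconst_sum: "fconst (sum f A) = (\<Sum>a\<in>A. fconst (f a) :: ('x, 'k::ring_1) freealg)"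
  by (induction A rule: infinite_finite_induct) (auto simp: fconst_add)

lemma poly_mapping_sum_single:
  "(p :: 'a \<Rightarrow>\<^sub>0 'b::comm_monoid_add)
     = (\<Sum>k\<in>Poly_Mapping.keys p. Poly_Mapping.single k (Poly_Mapping.lookup p k))"
  by (rule poly_mapping_eqI)
    (simp add: Poly_Mapping.lookup_sum lookup_single when_def sum.delta' in_keys_iff)

lemma fconst_commute: "fconst c * F = F * (fconst c :: ('x, 'k::comm_ring_1) freealg)"
proof -
  have single: "fconst c * Poly_Mapping.single u a = Poly_Mapping.single u a * (fconst c :: ('x, 'k) freealg)"
    for u a
    by (simp add: fconst_def mult_single mult.commute)
  show ?thesis
    by (subst (1 3) poly_mapping_sum_single)
      (simp add: sum_distrib_left sum_distrib_right single)
qed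

lemma freealg_induct [case_names const var add mult]:
  fixes F :: "('x, 'k::ring_1) freealg"
  assumes const: "\<And>c. P (fconst c)" and var: "\<And>x. P (fvar x)"
    and add: "\<And>F G. P F \<Longrightarrow> P G \<Longrightarrow> P (F + G)"
    and mult: "\<And>F G. P F \<Longrightarrow> P G \<Longrightarrow> P (F * G)"
  shows "P F"
proof -
  have monomial: "P (Poly_Mapping.single (Word xs) c)" for xs c
  proof (induction xs)
    case Nil
    show ?case
      using const[of c] by (simp add: fconst_def zero_word_def)
  next
    case (Cons x xs)
    have "Poly_Mapping.single (Word (x # xs)) c = fvar x * Poly_Mapping.single (Word xs) c"
      by (simp add: fvar_def mult_single)
    then show ?case
      using mult[OF var Cons.IH] by simp
  qed
  have "P (\<Sum>k\<in>K. Poly_Mapping.single k (Poly_Mapping.lookup F k))" if "finite K" for K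
    using that
  proof (induction K rule: finite_induct)
    case empty
    show ?case
      using const[of 0] by simp
  next
    case (insert u K)
    then show ?case
      using add[OF monomial] by (cases u) simp
  qed
  then show ?thesis
    by (subst poly_mapping_sum_single) simp
qed

section \<open>Linear consequences over a field\<close>

lemma if_zero_mult: "(if P then a else 0) * b = (if P then a * b else (0::'a::mult_zero))"
  by simp

lemma mult_if_zero: "a * (if P then b else 0) = (if P then a * b else (0::'a::mult_zero))"
  by simp

lemma if_conj_zero: "(if P \<and> Q then a else 0) = (if P then if Q then a else 0 else 0)"
  by simp

lemmas delta_simps = if_zero_mult mult_if_zero if_conj_zero sum.delta sum.delta'

definition scale_fun :: "'k::field \<Rightarrow> ('i \<Rightarrow> 'k) \<Rightarrow> 'i \<Rightarrow> 'k" where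
  "scale_fun c f = (\<lambda>i. c * f i)"

interpretation fun_space: vector_space "scale_fun :: 'k::field \<Rightarrow> ('i \<Rightarrow> 'k) \<Rightarrow> _"
  by unfold_locales (auto simp: scale_fun_def fun_eq_iff algebra_simps)

interpretation fun_space_pair:
  vector_space_pair "scale_fun :: 'k::field \<Rightarrow> ('i \<Rightarrow> 'k) \<Rightarrow> _" "scale_fun :: 'k \<Rightarrow> ('j \<Rightarrow> 'k) \<Rightarrow> _"
  by unfold_locales

lemma sum_fun_apply: "sum f A x = (\<Sum>a\<in>A. f a x)"
  by (induction A rule: infinite_finite_induct) auto

lemma linear_consequence_is_combination:
  fixes L :: "'j \<Rightarrow> 'i \<Rightarrow> 'k::field" and l :: "'i \<Rightarrow> 'k"
  assumes fin: "finite I" "finite J"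
    and consequence: "\<And>Z. (\<And>j. j \<in> J \<Longrightarrow> (\<Sum>i\<in>I. L j i * Z i) = 0) \<Longrightarrow> (\<Sum>i\<in>I. l i * Z i) = 0"
  obtains c where "\<And>i. i \<in> I \<Longrightarrow> (\<Sum>j\<in>J. c j * L j i) = l i"
proof -
  define Psi :: "('i \<Rightarrow> 'k) \<Rightarrow> 'j \<Rightarrow> 'k" where
    "Psi Z = (\<lambda>j. if j \<in> J then (\<Sum>i\<in>I. L j i * Z i) else 0)" for Z
  define unit :: "'i \<Rightarrow> 'i \<Rightarrow> 'k" where "unit i = (\<lambda>i'. if i' = i then 1 else 0)" for i
  define unit' :: "'j \<Rightarrow> 'j \<Rightarrow> 'k" where "unit' j = (\<lambda>j'. if j' = j then 1 else 0)" for j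
  have lin: "Vector_Spaces.linear scale_fun scale_fun Psi"
    unfolding linear_iff_module_hom module_hom_iff
    by (auto simp: Psi_def fun_eq_iff scale_fun_def sum.distrib algebra_simps sum_distrib_left
        fun_space.module_axioms)
  obtain g where lin_g: "Vector_Spaces.linear scale_fun scale_fun g"
    and g: "\<And>y. y \<in> range Psi \<Longrightarrow> Psi (g y) = y"
    using fun_space_pair.linear_exists_right_inverse_on[OF lin fun_space.subspace_UNIV] by auto
  \<comment> \<open>\<open>l\<close> kills \<open>ker Psi\<close>, so \<open>l = l \<circ> g \<circ> Psi\<close>; expanding \<open>l \<circ> g\<close> in the unit basis gives \<open>c\<close>.\<close>
  define c where "c j = (\<Sum>i\<in>I. l i * g (unit' j) i)" for j
  show thesis
  proof
    fix i assume i: "i \<in> I"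
    have Psi_unit: "Psi (unit i) = (\<Sum>j\<in>J. scale_fun (L j i) (unit' j))"
      using fin i by (auto simp: Psi_def unit_def unit'_def fun_eq_iff sum_fun_apply scale_fun_def
          if_distrib sum.delta' cong: if_cong)
    have kernel: "Psi (g (Psi (unit i)) - unit i) = 0"
      using g[of "Psi (unit i)"] fun_space_pair.linear_diff[OF lin] by simp
    have "(\<Sum>i'\<in>I. l i' * (g (Psi (unit i)) - unit i) i') = 0"
    proof (rule consequence)
      fix j assume "j \<in> J"
      then show "(\<Sum>i'\<in>I. L j i' * (g (Psi (unit i)) - unit i) i') = 0"
        using fun_cong[OF kernel, of j] by (simp add: Psi_def)
    qed
    then have "(\<Sum>i'\<in>I. l i' * g (Psi (unit i)) i') = (\<Sum>i'\<in>I. l i' * unit i i')"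
      by (simp add: right_diff_distrib sum_subtractf)
    also have "\<dots> = l i"
      using fin i by (simp add: unit_def if_distrib sum.delta' cong: if_cong)
    also have "(\<Sum>i'\<in>I. l i' * g (Psi (unit i)) i') = (\<Sum>j\<in>J. c j * L j i)"
      unfolding Psi_unit fun_space_pair.linear_sum[OF lin_g] fun_space_pair.linear_scale[OF lin_g]
      by (simp add: c_def sum_fun_apply scale_fun_def sum_distrib_left sum_distrib_right
          algebra_simps sum.swap[of _ I])
    finally show "(\<Sum>j\<in>J. c j * L j i) = l i" .
  qed
qed

locale field_scalars = ring R for R (structure) +
  fixes \<gamma> :: "'k::field \<Rightarrow> 'a"
  assumes scalar_closed: "\<gamma> c \<in> carrier R"
    and scalar_add: "\<gamma> (a + b) = \<gamma> a \<oplus> \<gamma> b"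
    and scalar_mult: "\<gamma> (a * b) = \<gamma> a \<otimes> \<gamma> b"
    and scalar_one: "\<gamma> 1 = \<one>"
begin

lemma scalar_zero: "\<gamma> 0 = \<zero>"
  using scalar_add[of 0 0] scalar_closed[of 0] by (metis add.l_cancel_one' add.right_neutral zero_closed)

lemma finsum_scalars_add:
  "(\<And>i. Y i \<in> carrier R) \<Longrightarrow>
    (\<Oplus>i\<in>I. \<gamma> (\<beta> i + \<beta>' i) \<otimes> Y i) = (\<Oplus>i\<in>I. \<gamma> (\<beta> i) \<otimes> Y i) \<oplus> (\<Oplus>i\<in>I. \<gamma> (\<beta>' i) \<otimes> Y i)"
  by (simp add: scalar_add l_distr finsum_addf scalar_closed)

lemma finsum_scalars_combination:
  assumes Y: "\<And>i. Y i \<in> carrier R" and "finite I" "finite K"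
  shows "(\<Oplus>i\<in>I. \<gamma> (\<Sum>j\<in>K. c j * M j i) \<otimes> Y i) = (\<Oplus>j\<in>K. \<gamma> (c j) \<otimes> (\<Oplus>i\<in>I. \<gamma> (M j i) \<otimes> Y i))"
  using \<open>finite K\<close>
proof (induction K rule: finite_induct)
  case empty
  show ?case
    by (simp add: scalar_zero Y)
next
  case (insert j K)
  have "(\<Oplus>i\<in>I. \<gamma> (c j * M j i) \<otimes> Y i) = (\<Oplus>i\<in>I. \<gamma> (c j) \<otimes> (\<gamma> (M j i) \<otimes> Y i))"
    unfolding scalar_mult by (intro finsum_cong') (auto simp: m_assoc scalar_closed Y)
  also have "\<dots> = \<gamma> (c j) \<otimes> (\<Oplus>i\<in>I. \<gamma> (M j i) \<otimes> Y i)"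
    by (rule finsum_rdistr[symmetric]) (auto simp: \<open>finite I\<close> scalar_closed Y)
  finally show ?case
    using insert by (simp add: finsum_scalars_add scalar_closed Y)
qed

lemma finsum_scalars_indicator:
  assumes Y: "\<And>i. Y i \<in> carrier R" and "finite I" "i \<in> I"
  shows "(\<Oplus>x\<in>I. \<gamma> (if x = i then 1 else 0) \<otimes> Y x) = Y i"
proof -
  have "(\<Oplus>x\<in>I. \<gamma> (if x = i then 1 else 0) \<otimes> Y x) = (\<Oplus>x\<in>I. if i = x then Y x else \<zero>)"
    by (intro finsum_cong') (auto simp: scalar_one scalar_zero Y)
  also have "\<dots> = Y i"
    using assms by (subst finsum_singleton) auto
  finally show ?thesis .
qed

lemma linear_consequence_transfer:
  fixes Y :: "'i \<Rightarrow> 'a"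
  assumes Y: "\<And>i. Y i \<in> carrier R" and fin: "finite I" "finite J"
    and over_field: "\<And>Z. (\<And>j. j \<in> J \<Longrightarrow> (\<Sum>i\<in>I. L j i * Z i) = (\<Sum>i\<in>I. L' j i * Z i))
        \<Longrightarrow> (\<Sum>i\<in>I. l i * Z i) = (\<Sum>i\<in>I. l' i * Z i)"
    and in_ring: "\<And>j. j \<in> J \<Longrightarrow> (\<Oplus>i\<in>I. \<gamma> (L j i) \<otimes> Y i) = (\<Oplus>i\<in>I. \<gamma> (L' j i) \<otimes> Y i)"
  shows "(\<Oplus>i\<in>I. \<gamma> (l i) \<otimes> Y i) = (\<Oplus>i\<in>I. \<gamma> (l' i) \<otimes> Y i)"
proof -
  have consequence: "(\<Sum>i\<in>I. (l i - l' i) * Z i) = 0"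
    if "\<And>j. j \<in> J \<Longrightarrow> (\<Sum>i\<in>I. (L j i - L' j i) * Z i) = 0" for Z
    using over_field[of Z] that by (simp add: left_diff_distrib sum_subtractf)
  obtain c where c: "\<And>i. i \<in> I \<Longrightarrow> (\<Sum>j\<in>J. c j * (L j i - L' j i)) = l i - l' i"
    using linear_consequence_is_combination[OF fin, where L = "\<lambda>j i. L j i - L' j i"
        and l = "\<lambda>i. l i - l' i"] consequence by blast
  have "l i + (\<Sum>j\<in>J. c j * L' j i) = l' i + (\<Sum>j\<in>J. c j * L j i)" if "i \<in> I" for i
    using c[OF that] by (simp add: right_diff_distrib sum_subtractf algebra_simps)
  then have "(\<Oplus>i\<in>I. \<gamma> (l i + (\<Sum>j\<in>J. c j * L' j i)) \<otimes> Y i)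
      = (\<Oplus>i\<in>I. \<gamma> (l' i + (\<Sum>j\<in>J. c j * L j i)) \<otimes> Y i)"
    by (intro finsum_cong') (auto simp: scalar_closed Y)
  then have "(\<Oplus>i\<in>I. \<gamma> (l i) \<otimes> Y i) \<oplus> (\<Oplus>j\<in>J. \<gamma> (c j) \<otimes> (\<Oplus>i\<in>I. \<gamma> (L' j i) \<otimes> Y i))
      = (\<Oplus>i\<in>I. \<gamma> (l' i) \<otimes> Y i) \<oplus> (\<Oplus>j\<in>J. \<gamma> (c j) \<otimes> (\<Oplus>i\<in>I. \<gamma> (L j i) \<otimes> Y i))"
    by (simp add: finsum_scalars_add finsum_scalars_combination Y fin)
  moreover have "(\<Oplus>j\<in>J. \<gamma> (c j) \<otimes> (\<Oplus>i\<in>I. \<gamma> (L' j i) \<otimes> Y i))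
      = (\<Oplus>j\<in>J. \<gamma> (c j) \<otimes> (\<Oplus>i\<in>I. \<gamma> (L j i) \<otimes> Y i))"
    using in_ring by (intro finsum_cong') (auto simp: scalar_closed Y)
  ultimately show ?thesis
    by (simp add: scalar_closed Y)
qed

end

lemma sum_supported_on_image:
  assumes "finite I" "inj_on e A" "e ` A \<subseteq> I" "\<And>x. x \<in> I - e ` A \<Longrightarrow> f x = 0"
  shows "sum f I = (\<Sum>a\<in>A. f (e a))"
proof -
  have "sum f I = sum f (e ` A)"
    by (rule sum.mono_neutral_right) (use assms in auto)
  also have "\<dots> = (\<Sum>a\<in>A. f (e a))"
    using assms(2) by (simp add: sum.reindex)
  finally show ?thesis .
qed

lemma (in ring) finsum_supported_on_image:
  assumes "finite I" and e: "inj_on e A" "e ` A \<subseteq> I"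
    and zero: "\<And>x. x \<in> I - e ` A \<Longrightarrow> f x = \<zero>" and f: "f \<in> I \<rightarrow> carrier R"
  shows "(\<Oplus>x\<in>I. f x) = (\<Oplus>a\<in>A. f (e a))"
proof -
  have "(\<Oplus>x\<in>I. f x) = (\<Oplus>x\<in>e ` A. f x)"
    by (rule add.finprod_mono_neutral_cong_right) (use assms in auto)
  also have "\<dots> = (\<Oplus>a\<in>A. f (e a))"
    using e f by (subst finsum_reindex) auto
  finally show ?thesis .
qed

lemma (in field_scalars) scalar_commutant_transfer:
  fixes Y :: "nat \<Rightarrow> nat \<Rightarrow> 'a" and \<G> :: "'k mat set"
  assumes Y: "\<And>p q. Y p q \<in> carrier R" and "finite \<G>"
    and over_field: "\<And>Z p q. (\<And>B p q. B \<in> \<G> \<Longrightarrow> p < n \<Longrightarrow> q < n \<Longrightarrow>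
          (\<Sum>m<n. B $$ (p, m) * Z m q) = (\<Sum>m<n. Z p m * B $$ (m, q))) \<Longrightarrow>
        p < n \<Longrightarrow> q < n \<Longrightarrow> Z p q = (if p = q then Z 0 0 else 0)"
    and in_ring: "\<And>B p q. B \<in> \<G> \<Longrightarrow> p < n \<Longrightarrow> q < n \<Longrightarrow>
        (\<Oplus>m\<in>{..<n}. \<gamma> (B $$ (p, m)) \<otimes> Y m q) = (\<Oplus>m\<in>{..<n}. \<gamma> (B $$ (m, q)) \<otimes> Y p m)"
    and kl: "k < n" "l < n"
  shows "Y k l = (if k = l then Y 0 0 else \<zero>)"
proof -
  let ?I = "{..<n} \<times> {..<n}"
  \<comment> \<open>\<open>L (B, p, q)\<close> and \<open>L' (B, p, q)\<close> are the coefficients of the \<open>(p, q)\<close> entries of \<open>B Z\<close> and \<open>Z B\<close>.\<close>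
  define L :: "'k mat \<times> nat \<times> nat \<Rightarrow> nat \<times> nat \<Rightarrow> 'k" where
    "L j x = (case j of (B, p, q) \<Rightarrow> if snd x = q then B $$ (p, fst x) else 0)" for j x
  define L' :: "'k mat \<times> nat \<times> nat \<Rightarrow> nat \<times> nat \<Rightarrow> 'k" where
    "L' j x = (case j of (B, p, q) \<Rightarrow> if fst x = p then B $$ (snd x, q) else 0)" for j x
  have in_column: "inj_on (\<lambda>a. (a, q)) {..<n}" "(\<lambda>a. (a, q)) ` {..<n} \<subseteq> ?I"
    and in_row: "inj_on (\<lambda>a. (p, a)) {..<n}" "(\<lambda>a. (p, a)) ` {..<n} \<subseteq> ?I"
    if "p < n" "q < n" for p q
    using that by (auto simp: inj_on_def)
  have field_sums: "(\<Sum>x\<in>?I. L (B, p, q) x * Z x) = (\<Sum>m<n. B $$ (p, m) * Z (m, q))"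
    "(\<Sum>x\<in>?I. L' (B, p, q) x * Z x) = (\<Sum>m<n. Z (p, m) * B $$ (m, q))"
    if "p < n" "q < n" for B p q and Z :: "nat \<times> nat \<Rightarrow> 'k"
    by (subst sum_supported_on_image[OF _ in_column[OF that]]
        sum_supported_on_image[OF _ in_row[OF that]]; auto simp: L_def L'_def mult.commute)+
  have ring_sums: "(\<Oplus>x\<in>?I. \<gamma> (L (B, p, q) x) \<otimes> Y (fst x) (snd x)) = (\<Oplus>m\<in>{..<n}. \<gamma> (B $$ (p, m)) \<otimes> Y m q)"
    "(\<Oplus>x\<in>?I. \<gamma> (L' (B, p, q) x) \<otimes> Y (fst x) (snd x)) = (\<Oplus>m\<in>{..<n}. \<gamma> (B $$ (m, q)) \<otimes> Y p m)"
    if "p < n" "q < n" for B p q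
    by (subst finsum_supported_on_image[OF _ in_column[OF that]]
        finsum_supported_on_image[OF _ in_row[OF that]];
        auto simp: L_def L'_def scalar_zero scalar_closed Y)+
  have "(\<Oplus>x\<in>?I. \<gamma> (if x = (k, l) then 1 else 0) \<otimes> Y (fst x) (snd x))
      = (\<Oplus>x\<in>?I. \<gamma> (if k = l \<and> x = (0, 0) then 1 else 0) \<otimes> Y (fst x) (snd x))"
  proof (rule linear_consequence_transfer[where L = L and L' = L' and J = "\<G> \<times> {..<n} \<times> {..<n}"])
    fix Z :: "nat \<times> nat \<Rightarrow> 'k"
    assume "\<And>j. j \<in> \<G> \<times> {..<n} \<times> {..<n} \<Longrightarrow> (\<Sum>x\<in>?I. L j x * Z x) = (\<Sum>x\<in>?I. L' j x * Z x)"
    then have "Z (k, l) = (if k = l then Z (0, 0) else 0)"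
      using over_field[of "\<lambda>p q. Z (p, q)", OF _ kl] by (force simp: field_sums)
    then show "(\<Sum>x\<in>?I. (if x = (k, l) then 1 else 0) * Z x)
        = (\<Sum>x\<in>?I. (if k = l \<and> x = (0, 0) then 1 else 0) * Z x)"
      using kl by (simp add: delta_simps)
  qed (use Y \<open>finite \<G>\<close> in_ring in \<open>auto simp: ring_sums\<close>)
  moreover have "(\<Oplus>x\<in>?I. \<gamma> (if x = (i, j) then 1 else 0) \<otimes> Y (fst x) (snd x)) = Y i j"
    if "i < n" "j < n" for i j
    using that by (subst finsum_scalars_indicator) (auto simp: Y)
  ultimately show ?thesis
    using kl by (cases "k = l") (simp_all add: scalar_zero Y)
qed

definition single_entry_mat :: "nat \<Rightarrow> nat \<Rightarrow> nat \<Rightarrow> 'a::zero \<Rightarrow> 'a mat" where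
  "single_entry_mat N i j x = mat N N (\<lambda>(p, q). if p = i \<and> q = j then x else 0)"

abbreviation mat_unit :: "nat \<Rightarrow> nat \<Rightarrow> nat \<Rightarrow> 'a::{zero,one} mat" where
  "mat_unit N i j \<equiv> single_entry_mat N i j 1"

lemma single_entry_mat_carrier [simp]: "single_entry_mat N i j x \<in> carrier_mat N N"
  by (simp add: single_entry_mat_def)

lemma single_entry_mat_dim [simp]:
  "dim_row (single_entry_mat N i j x) = N" "dim_col (single_entry_mat N i j x) = N"
  by (simp_all add: single_entry_mat_def)

lemma single_entry_mat_mult:
  fixes x y :: "'a::semiring_0"
  assumes "j < N"
  shows "single_entry_mat N i j x * single_entry_mat N j l y = single_entry_mat N i l (x * y)"
  by (rule eq_matI) (auto simp: single_entry_mat_def scalar_prod_def assms delta_simps)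

lemma single_entry_mat_add:
  "single_entry_mat N i j (x + y) = single_entry_mat N i j x + single_entry_mat N i j (y::'a::monoid_add)"
  by (rule eq_matI) (auto simp: single_entry_mat_def)

lemma scalar_mult_single_entry_mat:
  fixes x y :: "'a::semiring_1"
  assumes "i < N"
  shows "(x \<cdot>\<^sub>m 1\<^sub>m N) * single_entry_mat N i j y = single_entry_mat N i j (x * y)"
  by (rule eq_matI) (auto simp: single_entry_mat_def scalar_prod_def assms delta_simps)

lemma scalar_mat_commute:
  fixes x :: "'a::semiring_1"
  assumes "\<And>y. x * y = y * x" and "A \<in> carrier_mat N N"
  shows "(x \<cdot>\<^sub>m 1\<^sub>m N) * A = A * (x \<cdot>\<^sub>m 1\<^sub>m N)"
  using assms by (intro eq_matI) (auto simp: scalar_prod_def delta_simps)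

definition diag_indicator_mat :: "nat \<Rightarrow> (nat \<Rightarrow> bool) \<Rightarrow> 'a::{zero,one} mat" where
  "diag_indicator_mat N P = mat N N (\<lambda>(p, q). if p = q \<and> P p then 1 else 0)"

lemma diag_indicator_mat_carrier [simp]: "diag_indicator_mat N P \<in> carrier_mat N N"
  by (simp add: diag_indicator_mat_def)

lemma diag_indicator_mat_dim [simp]:
  "dim_row (diag_indicator_mat N P) = N" "dim_col (diag_indicator_mat N P) = N"
  by (simp_all add: diag_indicator_mat_def)

lemma diag_indicator_mult_single_entry:
  fixes x :: "'a::semiring_1"
  assumes "i < N"
  shows "diag_indicator_mat N P * single_entry_mat N i j x = (if P i then single_entry_mat N i j x else 0\<^sub>m N N)"
  by (rule eq_matI) (use assms in \<open>auto simp: diag_indicator_mat_def single_entry_mat_def scalar_prod_def delta_simps\<close>)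

lemma single_entry_mult_diag_indicator:
  fixes x :: "'a::semiring_1"
  assumes "j < N"
  shows "single_entry_mat N i j x * diag_indicator_mat N P = (if P j then single_entry_mat N i j x else 0\<^sub>m N N)"
  by (rule eq_matI) (use assms in \<open>auto simp: diag_indicator_mat_def single_entry_mat_def scalar_prod_def delta_simps\<close>)

lemma index_mult_mat_sum:
  "A \<in> carrier_mat N N' \<Longrightarrow> B \<in> carrier_mat N' N'' \<Longrightarrow> i < N \<Longrightarrow> j < N'' \<Longrightarrow>
    (A * B) $$ (i, j) = (\<Sum>l\<in>{0..<N'}. A $$ (i, l) * B $$ (l, j))"
  by (simp add: scalar_prod_def)

definition in_block :: "nat \<Rightarrow> (nat \<Rightarrow> 'v) \<Rightarrow> 'v \<Rightarrow> 'v \<Rightarrow> 'a::zero mat \<Rightarrow> bool" where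
  "in_block N lbl u v M \<longleftrightarrow> M \<in> carrier_mat N N \<and> (\<forall>i<N. \<forall>j<N. M $$ (i, j) \<noteq> 0 \<longrightarrow> lbl i = u \<and> lbl j = v)"

lemma in_block_mult:
  fixes M M' :: "'a::semiring_0 mat"
  assumes M: "in_block N lbl u v M" and M': "in_block N lbl v x M'"
  shows "in_block N lbl u x (M * M')"
  unfolding in_block_def
proof (intro conjI allI impI)
  show "M * M' \<in> carrier_mat N N"
    using M M' by (auto simp: in_block_def)
  fix i j assume ij: "i < N" "j < N" and "(M * M') $$ (i, j) \<noteq> 0"
  then have "(\<Sum>l\<in>{0..<N}. M $$ (i, l) * M' $$ (l, j)) \<noteq> 0"
    using M M' by (subst (asm) index_mult_mat_sum) (auto simp: in_block_def)
  then obtain l where "l \<in> {0..<N}" "M $$ (i, l) \<noteq> 0" "M' $$ (l, j) \<noteq> 0"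
    by (metis (no_types, lifting) mult_not_zero sum.neutral)
  then show "lbl i = u" "lbl j = x"
    using M M' ij by (auto simp: in_block_def)
qed

lemma in_block_mult_zero:
  fixes M M' :: "'a::semiring_0 mat"
  assumes M: "in_block N lbl u v M" and M': "in_block N lbl v' x M'" and "v \<noteq> v'"
  shows "M * M' = 0\<^sub>m N N"
proof (rule eq_matI)
  fix i j assume "i < dim_row (0\<^sub>m N N :: 'a mat)" "j < dim_col (0\<^sub>m N N :: 'a mat)"
  then have ij: "i < N" "j < N"
    by simp_all
  have "M $$ (i, l) * M' $$ (l, j) = 0" if "l < N" for l
    using M M' ij that \<open>v \<noteq> v'\<close> by (cases "M $$ (i, l) = 0") (auto simp: in_block_def)
  then show "(M * M') $$ (i, j) = 0\<^sub>m N N $$ (i, j)"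
    using M M' ij by (subst index_mult_mat_sum) (auto simp: in_block_def)
qed (use M M' in \<open>auto simp: in_block_def\<close>)

lemma in_block_diag_indicator: "in_block N lbl v v (diag_indicator_mat N (\<lambda>i. lbl i = v))"
  by (auto simp: in_block_def diag_indicator_mat_def split: if_splits)

lemma diag_indicator_mult_block:
  fixes M :: "'a::semiring_1 mat"
  assumes M: "in_block N lbl u v M"
  shows "diag_indicator_mat N (\<lambda>i. lbl i = u') * M = (if u' = u then M else 0\<^sub>m N N)"
proof (rule eq_matI)
  fix i j assume "i < dim_row (if u' = u then M else 0\<^sub>m N N)" "j < dim_col (if u' = u then M else 0\<^sub>m N N)"
  then have ij: "i < N" "j < N"
    using M by (auto simp: in_block_def split: if_splits)
  have "(diag_indicator_mat N (\<lambda>i. lbl i = u') * M) $$ (i, j) = (if lbl i = u' then M $$ (i, j) else 0)"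
    using M ij by (subst index_mult_mat_sum) (auto simp: in_block_def diag_indicator_mat_def delta_simps)
  then show "(diag_indicator_mat N (\<lambda>i. lbl i = u') * M) $$ (i, j) = (if u' = u then M else 0\<^sub>m N N) $$ (i, j)"
    using M ij by (cases "M $$ (i, j) = 0") (auto simp: in_block_def)
qed (use M in \<open>auto simp: in_block_def\<close>)

lemma block_mult_diag_indicator:
  fixes M :: "'a::semiring_1 mat"
  assumes M: "in_block N lbl u v M"
  shows "M * diag_indicator_mat N (\<lambda>i. lbl i = v') = (if v' = v then M else 0\<^sub>m N N)"
proof (rule eq_matI)
  fix i j assume "i < dim_row (if v' = v then M else 0\<^sub>m N N)" "j < dim_col (if v' = v then M else 0\<^sub>m N N)"
  then have ij: "i < N" "j < N"
    using M by (auto simp: in_block_def split: if_splits)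
  have "(M * diag_indicator_mat N (\<lambda>i. lbl i = v')) $$ (i, j) = (if lbl j = v' then M $$ (i, j) else 0)"
    using M ij by (subst index_mult_mat_sum) (auto simp: in_block_def diag_indicator_mat_def delta_simps)
  then show "(M * diag_indicator_mat N (\<lambda>i. lbl i = v')) $$ (i, j) = (if v' = v then M else 0\<^sub>m N N) $$ (i, j)"
    using M ij by (cases "M $$ (i, j) = 0") (auto simp: in_block_def)
qed (use M in \<open>auto simp: in_block_def\<close>)

section \<open>Ring homomorphisms out of matrix rings\<close>

context ring
begin

lemma mat_hom_closed:
  "h \<in> ring_hom (ring_mat TYPE('r::semiring_1) N b) R \<Longrightarrow> A \<in> carrier_mat N N \<Longrightarrow> h A \<in> carrier R"
  using ring_hom_closed[of h "ring_mat TYPE('r) N b" R A] by (simp add: ring_mat_simps)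

lemma mat_hom_mult:
  "h \<in> ring_hom (ring_mat TYPE('r::semiring_1) N b) R \<Longrightarrow> A \<in> carrier_mat N N \<Longrightarrow>
    B \<in> carrier_mat N N \<Longrightarrow> h (A * B) = h A \<otimes> h B"
  using ring_hom_mult[of h "ring_mat TYPE('r) N b" R A B] by (simp add: ring_mat_simps)

lemma mat_hom_add:
  "h \<in> ring_hom (ring_mat TYPE('r::semiring_1) N b) R \<Longrightarrow> A \<in> carrier_mat N N \<Longrightarrow>
    B \<in> carrier_mat N N \<Longrightarrow> h (A + B) = h A \<oplus> h B"
  using ring_hom_add[of h "ring_mat TYPE('r) N b" R A B] by (simp add: ring_mat_simps)

lemma mat_hom_zero:
  assumes h: "h \<in> ring_hom (ring_mat TYPE('r::semiring_1) N b) R"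
  shows "h (0\<^sub>m N N) = \<zero>"
proof -
  have "h (0\<^sub>m N N) \<oplus> h (0\<^sub>m N N) = h (0\<^sub>m N N) \<oplus> \<zero>"
    using mat_hom_add[OF h, of "0\<^sub>m N N" "0\<^sub>m N N"] mat_hom_closed[OF h, of "0\<^sub>m N N"] by simp
  then show ?thesis
    using mat_hom_closed[OF h, of "0\<^sub>m N N"] by simp
qed

lemma mat_hom_sum:
  assumes h: "h \<in> ring_hom (ring_mat TYPE('r::semiring_1) N b) R"
    and "finite S" and M: "\<And>s. s \<in> S \<Longrightarrow> M s \<in> carrier_mat N N"
  shows "h (mat N N (\<lambda>ij. \<Sum>s\<in>S. M s $$ ij)) = (\<Oplus>s\<in>S. h (M s))"
  using \<open>finite S\<close> M
proof (induction S rule: finite_induct)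
  case empty
  have "mat N N (\<lambda>ij. \<Sum>s\<in>{}. M s $$ ij) = 0\<^sub>m N N"
    by (rule eq_matI) auto
  then show ?case
    using mat_hom_zero[OF h] by simp
next
  case (insert s S)
  have "mat N N (\<lambda>ij. \<Sum>s\<in>insert s S. M s $$ ij) = M s + mat N N (\<lambda>ij. \<Sum>s\<in>S. M s $$ ij)"
    using insert by (intro eq_matI) auto
  then show ?case
    using insert by (simp add: mat_hom_add[OF h] mat_hom_closed[OF h])
qed

lemma mat_hom_decompose:
  assumes h: "h \<in> ring_hom (ring_mat TYPE('r::semiring_1) N b) R" and A: "A \<in> carrier_mat N N"
  shows "h A = (\<Oplus>x\<in>{..<N} \<times> {..<N}. h (single_entry_mat N (fst x) (snd x) (A $$ x)))"
proof -
  have entry: "(if i = fst x \<and> j = snd x then A $$ x else 0) = (if x = (i, j) then A $$ (i, j) else 0)"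
    for i j x
    by auto
  have "A = mat N N (\<lambda>ij. \<Sum>x\<in>{..<N} \<times> {..<N}. single_entry_mat N (fst x) (snd x) (A $$ x) $$ ij)"
    using A by (intro eq_matI) (auto simp: single_entry_mat_def entry)
  then show ?thesis
    by (subst (1) mat_hom_sum[OF h, symmetric]) auto
qed

end

locale mat_hom_pair =
  fixes T :: "('c, 'e) ring_scheme" (structure) and N :: nat
    and \<rho>1 \<rho>2 :: "'a::semiring_1 mat \<Rightarrow> 'c"
  assumes ring_T: "ring T"
    and hom1: "\<rho>1 \<in> ring_hom (ring_mat TYPE('a) N ()) T"
    and hom2: "\<rho>2 \<in> ring_hom (ring_mat TYPE('a) N ()) T"
begin

sublocale ring T
  by (rule ring_T)

abbreviation agree :: "'a mat \<Rightarrow> bool" where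
  "agree A \<equiv> \<rho>1 A = \<rho>2 A"

lemma closed1: "A \<in> carrier_mat N N \<Longrightarrow> \<rho>1 A \<in> carrier T"
  by (rule mat_hom_closed[OF hom1])

lemma closed2: "A \<in> carrier_mat N N \<Longrightarrow> \<rho>2 A \<in> carrier T"
  by (rule mat_hom_closed[OF hom2])

lemma mult1: "A \<in> carrier_mat N N \<Longrightarrow> B \<in> carrier_mat N N \<Longrightarrow> \<rho>1 (A * B) = \<rho>1 A \<otimes> \<rho>1 B"
  by (rule mat_hom_mult[OF hom1])

lemma mult2: "A \<in> carrier_mat N N \<Longrightarrow> B \<in> carrier_mat N N \<Longrightarrow> \<rho>2 (A * B) = \<rho>2 A \<otimes> \<rho>2 B"
  by (rule mat_hom_mult[OF hom2])

lemma agree_add: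
  "A \<in> carrier_mat N N \<Longrightarrow> B \<in> carrier_mat N N \<Longrightarrow> agree A \<Longrightarrow> agree B \<Longrightarrow> agree (A + B)"
  by (simp add: mat_hom_add[OF hom1] mat_hom_add[OF hom2])

lemma agree_mult:
  "A \<in> carrier_mat N N \<Longrightarrow> B \<in> carrier_mat N N \<Longrightarrow> agree A \<Longrightarrow> agree B \<Longrightarrow> agree (A * B)"
  by (simp add: mult1 mult2)

lemma agree_zigzag:
  assumes carrier: "u \<in> carrier_mat N N" "v \<in> carrier_mat N N" and u: "u * v * u = u"
    and agree: "agree v" "agree (u * v)" "agree (v * u)"
  shows "agree u"
proof -
  have uv: "u * v \<in> carrier_mat N N" and vu: "v * u \<in> carrier_mat N N"
    using carrier by (auto intro: mult_carrier_mat)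
  have "\<rho>1 u = \<rho>1 (u * v) \<otimes> \<rho>1 u"
    using mult1[OF uv carrier(1)] u by simp
  also have "\<dots> = \<rho>2 u \<otimes> \<rho>1 v \<otimes> \<rho>1 u"
    using agree by (simp add: mult2 carrier)
  also have "\<dots> = \<rho>2 u \<otimes> \<rho>1 (v * u)"
    by (simp add: mult1 m_assoc closed1 closed2 carrier)
  also have "\<dots> = \<rho>2 (u * v * u)"
    using agree mult2[OF uv carrier(1)] by (simp add: mult2 m_assoc closed2 carrier vu)
  finally show ?thesis
    using u by simp
qed

lemma agree_if_single_entries_agree:
  assumes "\<And>i j x. i < N \<Longrightarrow> j < N \<Longrightarrow> agree (single_entry_mat N i j x)"
    and "A \<in> carrier_mat N N"
  shows "agree A"
proof -
  have "\<rho>1 A = (\<Oplus>x\<in>{..<N} \<times> {..<N}. \<rho>1 (single_entry_mat N (fst x) (snd x) (A $$ x)))"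
    by (rule mat_hom_decompose[OF hom1 assms(2)])
  also have "\<dots> = (\<Oplus>x\<in>{..<N} \<times> {..<N}. \<rho>2 (single_entry_mat N (fst x) (snd x) (A $$ x)))"
    using assms(1) by (intro finsum_cong') (auto simp: closed2)
  also have "\<dots> = \<rho>2 A"
    by (rule mat_hom_decompose[OF hom2 assms(2), symmetric])
  finally show ?thesis
    by simp
qed

end

section \<open>Homomorphisms agreeing on the image of \<open>g\<close>\<close>

definition Xcol_mat :: "nat \<Rightarrow> nat \<Rightarrow> (nat \<Rightarrow> 'x) \<Rightarrow> ('x, 'k::ring_1) freealg mat" where
  "Xcol_mat n m xv = mat (Suc n) (Suc n) (\<lambda>(i, j). if i < n \<and> j = n then Xcol n m xv i else 0)"

lemma embed_mat_carrier [simp]: "embed_mat n B \<in> carrier_mat (Suc n) (Suc n)"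
  by (simp add: embed_mat_def)

lemma embed_mat_dim [simp]: "dim_row (embed_mat n B) = Suc n" "dim_col (embed_mat n B) = Suc n"
  by (simp_all add: embed_mat_def)

lemma Xcol_mat_carrier [simp]: "Xcol_mat n m xv \<in> carrier_mat (Suc n) (Suc n)"
  by (simp add: Xcol_mat_def)

locale generator_agreement = mat_hom_pair T "Suc n" \<rho>1 \<rho>2
  for T :: "('c, 'e) ring_scheme" (structure) and n :: nat
    and \<rho>1 \<rho>2 :: "('x, 'k::field) freealg mat \<Rightarrow> 'c" +
  fixes m :: nat and xv :: "nat \<Rightarrow> 'x" and \<G> :: "'k mat set"
  assumes finite_\<G>: "finite \<G>"
    and commutant_scalar: "\<And>Z p q. (\<And>B p q. B \<in> \<G> \<Longrightarrow> p < n \<Longrightarrow> q < n \<Longrightarrow>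
          (\<Sum>m<n. B $$ (p, m) * Z m q) = (\<Sum>m<n. Z p m * B $$ (m, q))) \<Longrightarrow>
        p < n \<Longrightarrow> q < n \<Longrightarrow> Z p q = (if p = q then Z 0 0 else 0)"
    and m: "0 < m" "m \<le> n"
    and variables: "\<And>x. \<exists>i\<in>{1..<m}. xv i = x"
    and agree_scalar: "\<And>c. agree (fconst c \<cdot>\<^sub>m 1\<^sub>m (Suc n))"
    and agree_embed: "\<And>B. B \<in> \<G> \<Longrightarrow> agree (embed_mat n B)"
    and agree_embed_one: "agree (embed_mat n (1\<^sub>m n))"
    and agree_corner: "agree (mat_unit (Suc n) n n)"
    and agree_Xcol: "agree (Xcol_mat n m xv)"
begin

definition \<gamma> :: "'k \<Rightarrow> 'c" where
  "\<gamma> c = \<rho>1 (fconst c \<cdot>\<^sub>m 1\<^sub>m (Suc n))"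

sublocale field_scalars T \<gamma>
proof
  show "\<gamma> c \<in> carrier T" for c
    unfolding \<gamma>_def by (rule closed1) simp
  show "\<gamma> (a + b) = \<gamma> a \<oplus> \<gamma> b" for a b
  proof -
    have sum: "fconst (a + b) \<cdot>\<^sub>m 1\<^sub>m (Suc n) = fconst a \<cdot>\<^sub>m 1\<^sub>m (Suc n) + fconst b \<cdot>\<^sub>m 1\<^sub>m (Suc n)"
      by (rule eq_matI) (auto simp: fconst_add distrib_left)
    show ?thesis
      unfolding \<gamma>_def sum by (rule mat_hom_add[OF hom1]) simp_all
  qed
  show "\<gamma> (a * b) = \<gamma> a \<otimes> \<gamma> b" for a b
  proof -
    have product: "fconst (a * b) \<cdot>\<^sub>m 1\<^sub>m (Suc n) = fconst a \<cdot>\<^sub>m 1\<^sub>m (Suc n) * (fconst b \<cdot>\<^sub>m 1\<^sub>m (Suc n))"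
      by (rule eq_matI) (auto simp: fconst_mult scalar_prod_def delta_simps)
    show ?thesis
      unfolding \<gamma>_def product by (rule mult1) simp_all
  qed
  have "fconst 1 \<cdot>\<^sub>m 1\<^sub>m (Suc n) = (1\<^sub>m (Suc n) :: ('x, 'k) freealg mat)"
    by (rule eq_matI) auto
  then show "\<gamma> 1 = \<one>"
    using ring_hom_one[OF hom1] by (simp add: \<gamma>_def ring_mat_simps del: fconst_one)
qed

lemma \<gamma>_eq_\<rho>2: "\<gamma> c = \<rho>2 (fconst c \<cdot>\<^sub>m 1\<^sub>m (Suc n))"
  using agree_scalar by (simp add: \<gamma>_def)

lemma single_entry_as_product:
  "i < Suc n \<Longrightarrow> single_entry_mat (Suc n) i j (fconst c) = fconst c \<cdot>\<^sub>m 1\<^sub>m (Suc n) * mat_unit (Suc n) i j"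
  using scalar_mult_single_entry_mat[of i "Suc n" "fconst c" j 1, symmetric] by simp

lemma single_entry_fconst1: "i < Suc n \<Longrightarrow> \<rho>1 (single_entry_mat (Suc n) i j (fconst c)) = \<gamma> c \<otimes> \<rho>1 (mat_unit (Suc n) i j)"
  unfolding \<gamma>_def single_entry_as_product by (intro mult1) simp_all

lemma single_entry_fconst2: "i < Suc n \<Longrightarrow> \<rho>2 (single_entry_mat (Suc n) i j (fconst c)) = \<gamma> c \<otimes> \<rho>2 (mat_unit (Suc n) i j)"
  unfolding \<gamma>_eq_\<rho>2 single_entry_as_product by (intro mult2) simp_all

lemma \<gamma>_commutes_\<rho>1: "A \<in> carrier_mat (Suc n) (Suc n) \<Longrightarrow> \<gamma> c \<otimes> \<rho>1 A = \<rho>1 A \<otimes> \<gamma> c"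
  unfolding \<gamma>_def by (simp add: mult1[symmetric] scalar_mat_commute fconst_commute)

lemma row_expansion:
  assumes "p < n"
  shows "\<rho>1 (mat_unit (Suc n) 0 p * embed_mat n B) = (\<Oplus>q\<in>{..<n}. \<gamma> (B $$ (p, q)) \<otimes> \<rho>1 (mat_unit (Suc n) 0 q))"
proof -
  have "mat_unit (Suc n) 0 p * embed_mat n B
      = (mat (Suc n) (Suc n) (\<lambda>ij. \<Sum>q<n. single_entry_mat (Suc n) 0 q (fconst (B $$ (p, q))) $$ ij) :: ('x, 'k) freealg mat)"
    (is "?A = ?M")
  proof (rule eq_matI)
    fix i j assume "i < dim_row ?M" "j < dim_col ?M"
    then show "?A $$ (i, j) = ?M $$ (i, j)"
      using assms by (cases "i = 0"; cases "j < n")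
        (auto simp: single_entry_mat_def embed_mat_def scalar_prod_def delta_simps)
  qed auto
  then show ?thesis
    by (simp add: mat_hom_sum[OF hom1] single_entry_fconst1)
qed

lemma column_expansion:
  assumes "q < n"
  shows "\<rho>2 (embed_mat n B * mat_unit (Suc n) q 0) = (\<Oplus>p\<in>{..<n}. \<gamma> (B $$ (p, q)) \<otimes> \<rho>2 (mat_unit (Suc n) p 0))"
proof -
  have "embed_mat n B * mat_unit (Suc n) q 0
      = (mat (Suc n) (Suc n) (\<lambda>ij. \<Sum>p<n. single_entry_mat (Suc n) p 0 (fconst (B $$ (p, q))) $$ ij) :: ('x, 'k) freealg mat)"
    (is "?A = ?M")
  proof (rule eq_matI)
    fix i j assume "i < dim_row ?M" "j < dim_col ?M"
    then show "?A $$ (i, j) = ?M $$ (i, j)"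
      using assms by (cases "j = 0"; cases "i < n")
        (auto simp: single_entry_mat_def embed_mat_def scalar_prod_def delta_simps)
  qed auto
  then show ?thesis
    by (simp add: mat_hom_sum[OF hom2])
      (auto intro!: finsum_cong' simp: single_entry_fconst2 scalar_closed closed2)
qed

lemma n_pos: "0 < n"
  using m by simp

definition Y :: "nat \<Rightarrow> nat \<Rightarrow> 'c" where
  "Y p q = \<rho>1 (mat_unit (Suc n) 0 p) \<otimes> \<rho>2 (mat_unit (Suc n) q 0)"

lemma Y_closed: "Y p q \<in> carrier T"
  by (simp add: Y_def closed1 closed2)

lemma Y_commutes:
  assumes B: "B \<in> \<G>" and pq: "p < n" "q < n"
  shows "(\<Oplus>m\<in>{..<n}. \<gamma> (B $$ (p, m)) \<otimes> Y m q) = (\<Oplus>m\<in>{..<n}. \<gamma> (B $$ (m, q)) \<otimes> Y p m)"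
proof -
  let ?E = "mat_unit (Suc n) :: nat \<Rightarrow> nat \<Rightarrow> ('x, 'k) freealg mat"
  have "(\<Oplus>m\<in>{..<n}. \<gamma> (B $$ (p, m)) \<otimes> Y m q)
      = (\<Oplus>m\<in>{..<n}. \<gamma> (B $$ (p, m)) \<otimes> \<rho>1 (?E 0 m)) \<otimes> \<rho>2 (?E q 0)"
    unfolding Y_def by (subst finsum_ldistr) (auto simp: m_assoc scalar_closed closed1 closed2)
  also have "\<dots> = \<rho>1 (?E 0 p) \<otimes> \<rho>1 (embed_mat n B) \<otimes> \<rho>2 (?E q 0)"
    by (simp add: row_expansion[OF pq(1), symmetric] mult1)
  also have "\<dots> = \<rho>1 (?E 0 p) \<otimes> \<rho>2 (embed_mat n B * ?E q 0)"
    using agree_embed[OF B] by (simp add: mult2 m_assoc closed1 closed2)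
  also have "\<dots> = (\<Oplus>m\<in>{..<n}. \<rho>1 (?E 0 p) \<otimes> (\<gamma> (B $$ (m, q)) \<otimes> \<rho>2 (?E m 0)))"
    unfolding column_expansion[OF pq(2)]
    by (subst finsum_rdistr) (auto simp: scalar_closed closed1 closed2)
  also have "\<dots> = (\<Oplus>m\<in>{..<n}. \<gamma> (B $$ (m, q)) \<otimes> Y p m)"
    unfolding Y_def
    by (intro finsum_cong') (auto simp: \<gamma>_commutes_\<rho>1 m_assoc[symmetric] scalar_closed closed1 closed2)
  finally show ?thesis .
qed

lemma Y_scalar: "k < n \<Longrightarrow> l < n \<Longrightarrow> Y k l = (if k = l then Y 0 0 else \<zero>)"
  by (rule scalar_commutant_transfer[OF Y_closed finite_\<G> commutant_scalar Y_commutes])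

lemma unit_as_product: "i < Suc n \<Longrightarrow> j < Suc n \<Longrightarrow>
    mat_unit (Suc n) i j = mat_unit (Suc n) i 0 * (mat_unit (Suc n) 0 j :: ('x, 'k) freealg mat)"
  by (simp add: single_entry_mat_mult)

lemma unit_sandwich:
  assumes "i < Suc n" "j < Suc n" "k < Suc n" "l < Suc n"
  shows "\<rho>1 (mat_unit (Suc n) i j) \<otimes> \<rho>2 (mat_unit (Suc n) k l)
    = \<rho>1 (mat_unit (Suc n) i 0) \<otimes> Y j k \<otimes> \<rho>2 (mat_unit (Suc n) 0 l)"
  using assms by (simp add: unit_as_product[of i j] unit_as_product[of k l] mult1 mult2 Y_def
      m_assoc closed1 closed2)

lemma embed_one_mat: "embed_mat n (1\<^sub>m n) = (diag_indicator_mat (Suc n) (\<lambda>i. i < n) :: ('x, 'k) freealg mat)"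
  by (rule eq_matI) (auto simp: embed_mat_def diag_indicator_mat_def)

lemma embed_one_expansion:
  "embed_mat n (1\<^sub>m n) = mat (Suc n) (Suc n) (\<lambda>ij. \<Sum>l<n. (mat_unit (Suc n) l l :: ('x, 'k) freealg mat) $$ ij)"
  unfolding embed_one_mat by (rule eq_matI) (auto simp: diag_indicator_mat_def single_entry_mat_def delta_simps)

lemma \<rho>1_unit_factor:
  assumes ij: "i < n" "j < n"
  shows "\<rho>1 (mat_unit (Suc n) i j) = \<rho>1 (mat_unit (Suc n) i 0) \<otimes> Y 0 0 \<otimes> \<rho>2 (mat_unit (Suc n) 0 j)"
proof -
  let ?E = "mat_unit (Suc n) :: nat \<Rightarrow> nat \<Rightarrow> ('x, 'k) freealg mat"
  let ?D = "embed_mat n (1\<^sub>m n) :: ('x, 'k) freealg mat"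
  have "?E i j * ?D = ?E i j"
    using ij unfolding embed_one_mat by (simp add: single_entry_mult_diag_indicator)
  then have "\<rho>1 (?E i j) = \<rho>1 (?E i j) \<otimes> \<rho>2 ?D"
    using agree_embed_one mult1[of "?E i j" ?D] by simp
  also have "\<dots> = (\<Oplus>l\<in>{..<n}. \<rho>1 (?E i j) \<otimes> \<rho>2 (?E l l))"
    unfolding embed_one_expansion by (simp add: mat_hom_sum[OF hom2] finsum_rdistr closed1 closed2)
  also have "\<dots> = (\<Oplus>l\<in>{..<n}. if j = l then \<rho>1 (?E i 0) \<otimes> Y 0 0 \<otimes> \<rho>2 (?E 0 l) else \<zero>)"
  proof (intro finsum_cong')
    fix l assume "l \<in> {..<n}"
    then show "\<rho>1 (?E i j) \<otimes> \<rho>2 (?E l l) = (if j = l then \<rho>1 (?E i 0) \<otimes> Y 0 0 \<otimes> \<rho>2 (?E 0 l) else \<zero>)"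
      using ij unit_sandwich[of i j l l] Y_scalar[of j l] by (auto simp: closed1 closed2)
  qed (auto simp: closed1 closed2 Y_closed)
  also have "\<dots> = \<rho>1 (?E i 0) \<otimes> Y 0 0 \<otimes> \<rho>2 (?E 0 j)"
    using ij by (subst finsum_singleton) (auto simp: closed1 closed2 Y_closed)
  finally show ?thesis .
qed

lemma \<rho>2_unit_factor:
  assumes ij: "i < n" "j < n"
  shows "\<rho>2 (mat_unit (Suc n) i j) = \<rho>1 (mat_unit (Suc n) i 0) \<otimes> Y 0 0 \<otimes> \<rho>2 (mat_unit (Suc n) 0 j)"
proof -
  let ?E = "mat_unit (Suc n) :: nat \<Rightarrow> nat \<Rightarrow> ('x, 'k) freealg mat"
  let ?D = "embed_mat n (1\<^sub>m n) :: ('x, 'k) freealg mat"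
  have "?D * ?E i j = ?E i j"
    using ij unfolding embed_one_mat by (simp add: diag_indicator_mult_single_entry)
  then have "\<rho>2 (?E i j) = \<rho>1 ?D \<otimes> \<rho>2 (?E i j)"
    using agree_embed_one mult2[of ?D "?E i j"] by simp
  also have "\<dots> = (\<Oplus>l\<in>{..<n}. \<rho>1 (?E l l) \<otimes> \<rho>2 (?E i j))"
    unfolding embed_one_expansion by (simp add: mat_hom_sum[OF hom1] finsum_ldistr closed1 closed2)
  also have "\<dots> = (\<Oplus>l\<in>{..<n}. if i = l then \<rho>1 (?E l 0) \<otimes> Y 0 0 \<otimes> \<rho>2 (?E 0 j) else \<zero>)"
  proof (intro finsum_cong')
    fix l assume "l \<in> {..<n}"
    then show "\<rho>1 (?E l l) \<otimes> \<rho>2 (?E i j) = (if i = l then \<rho>1 (?E l 0) \<otimes> Y 0 0 \<otimes> \<rho>2 (?E 0 j) else \<zero>)"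
      using ij unit_sandwich[of l l i j] Y_scalar[of l i] by (auto simp: closed1 closed2)
  qed (auto simp: closed1 closed2 Y_closed)
  also have "\<dots> = \<rho>1 (?E i 0) \<otimes> Y 0 0 \<otimes> \<rho>2 (?E 0 j)"
    using ij by (subst finsum_singleton) (auto simp: closed1 closed2 Y_closed)
  finally show ?thesis .
qed

lemma agree_unit_below:
  assumes "i < n" "j < n"
  shows "agree (mat_unit (Suc n) i j)"
  using \<rho>1_unit_factor[OF assms] \<rho>2_unit_factor[OF assms] by simp

lemma agree_unit_top_right: "agree (mat_unit (Suc n) 0 n)"
proof -
  have "mat_unit (Suc n) 0 n = mat_unit (Suc n) 0 0 * (Xcol_mat n m xv :: ('x, 'k) freealg mat)"
    using m by (auto intro!: eq_matI simp: single_entry_mat_def Xcol_mat_def Xcol_def scalar_prod_def delta_simps)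
  then show ?thesis
    using agree_unit_below[OF n_pos n_pos] agree_Xcol by (simp add: agree_mult)
qed

lemma agree_unit_bottom_left: "agree (mat_unit (Suc n) n 0)"
proof (rule agree_zigzag)
  show "mat_unit (Suc n) n 0 * mat_unit (Suc n) 0 n * mat_unit (Suc n) n 0 = (mat_unit (Suc n) n 0 :: ('x, 'k) freealg mat)"
    by (simp add: single_entry_mat_mult)
  show "agree (mat_unit (Suc n) n 0 * mat_unit (Suc n) 0 n)"
    using agree_corner by (simp add: single_entry_mat_mult)
  show "agree (mat_unit (Suc n) 0 n * mat_unit (Suc n) n 0)"
    using agree_unit_below[OF n_pos n_pos] by (simp add: single_entry_mat_mult)
qed (simp_all add: agree_unit_top_right)

lemma agree_unit:
  assumes "i < Suc n" "j < Suc n"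
  shows "agree (mat_unit (Suc n) i j)"
proof -
  have "agree (mat_unit (Suc n) i 0)"
    using assms(1) agree_unit_below[OF _ n_pos] agree_unit_bottom_left by (cases "i < n") (auto simp: less_Suc_eq)
  moreover have "agree (mat_unit (Suc n) 0 j)"
    using assms(2) agree_unit_below[OF n_pos] agree_unit_top_right by (cases "j < n") (auto simp: less_Suc_eq)
  ultimately show ?thesis
    unfolding unit_as_product[OF assms] by (simp add: agree_mult)
qed

lemma agree_variable_entry:
  assumes ij: "i < Suc n" "j < Suc n"
  shows "agree (single_entry_mat (Suc n) i j (fvar x))"
proof -
  obtain t where t: "t \<in> {1..<m}" "xv t = x"
    using variables by blast
  let ?S = "single_entry_mat (Suc n) t n (fvar x) :: ('x, 'k) freealg mat"
  have "?S = mat_unit (Suc n) t t * Xcol_mat n m xv"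
    using t m by (auto intro!: eq_matI simp: single_entry_mat_def Xcol_mat_def Xcol_def scalar_prod_def delta_simps)
  then have "agree ?S"
    using t m agree_unit agree_Xcol by (simp add: agree_mult)
  then have "agree (mat_unit (Suc n) i t * ?S)"
    using t m ij agree_unit by (intro agree_mult) auto
  then have "agree (mat_unit (Suc n) i t * ?S * mat_unit (Suc n) n j)"
    by (rule agree_mult[rotated 2])
      (use ij agree_unit in \<open>auto intro: mult_carrier_mat[OF single_entry_mat_carrier single_entry_mat_carrier]\<close>)
  moreover have "single_entry_mat (Suc n) i j (fvar x) = mat_unit (Suc n) i t * ?S * mat_unit (Suc n) n j"
    using t m ij by (simp add: single_entry_mat_mult)
  ultimately show ?thesis
    by simp
qed

lemma agree_single_entry:
  assumes "i < Suc n" "j < Suc n"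
  shows "agree (single_entry_mat (Suc n) i j F)"
  using assms
proof (induction F arbitrary: i j rule: freealg_induct)
  case (const c)
  then show ?case
    using agree_scalar agree_unit by (simp add: single_entry_as_product agree_mult)
next
  case (var x)
  then show ?case
    by (rule agree_variable_entry)
next
  case (add F G)
  then show ?case
    by (simp add: single_entry_mat_add agree_add)
next
  case (mult F G)
  then have "agree (single_entry_mat (Suc n) i i F * single_entry_mat (Suc n) i j G)"
    by (intro agree_mult) simp_all
  then show ?case
    using single_entry_mat_mult[of i "Suc n" i F j G] mult.prems by simp
qed

theorem agree_everywhere: "A \<in> carrier_mat (Suc n) (Suc n) \<Longrightarrow> \<rho>1 A = \<rho>2 A"
  using agree_if_single_entries_agree[OF agree_single_entry] by simp

end

section \<open>The path representation \<open>g\<close>\<close>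

definition lin_ext :: "nat \<Rightarrow> ('p \<Rightarrow> ('x, 'k::ring_1) freealg mat) \<Rightarrow> ('p \<Rightarrow> 'k) \<Rightarrow> ('x, 'k) freealg mat" where
  "lin_ext N G c = mat N N (\<lambda>ij. \<Sum>p\<in>{p. c p \<noteq> 0}. fconst (c p) * G p $$ ij)"

lemma lin_ext_carrier [simp]: "lin_ext N G c \<in> carrier_mat N N"
  by (simp add: lin_ext_def)

lemma lin_ext_dim [simp]: "dim_row (lin_ext N G c) = N" "dim_col (lin_ext N G c) = N"
  by (simp_all add: lin_ext_def)

lemma lin_ext_index:
  assumes "finite F" "{p. c p \<noteq> 0} \<subseteq> F" "i < N" "j < N"
  shows "lin_ext N G c $$ (i, j) = (\<Sum>p\<in>F. fconst (c p) * G p $$ (i, j))"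
  using assms by (simp add: lin_ext_def) (rule sum.mono_neutral_left; auto)

lemma lin_ext_add:
  assumes "finite {p. c p \<noteq> 0}" "finite {p. d p \<noteq> 0}"
  shows "lin_ext N G (\<lambda>p. c p + d p) = lin_ext N G c + lin_ext N G d"
proof (rule eq_matI)
  fix i j assume "i < dim_row (lin_ext N G c + lin_ext N G d)" "j < dim_col (lin_ext N G c + lin_ext N G d)"
  then have ij: "i < N" "j < N"
    by simp_all
  let ?F = "{p. c p \<noteq> 0} \<union> {p. d p \<noteq> 0}"
  have F: "finite ?F"
    using assms by simp
  have "lin_ext N G (\<lambda>p. c p + d p) $$ (i, j) = (\<Sum>p\<in>?F. fconst (c p + d p) * G p $$ (i, j))"
    by (rule lin_ext_index) (use F ij in auto)
  then show "lin_ext N G (\<lambda>p. c p + d p) $$ (i, j) = (lin_ext N G c + lin_ext N G d) $$ (i, j)"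
    using F ij by (simp add: lin_ext_index[of ?F] fconst_add distrib_right sum.distrib)
qed simp_all

lemma lin_ext_indicator:
  assumes "G p0 \<in> carrier_mat N N"
  shows "lin_ext N G (\<lambda>p. if p = p0 then 1 else 0) = G p0"
  using assms by (intro eq_matI) (auto simp: lin_ext_index[of "{p0}"])

lemma lin_ext_convolution:
  fixes G :: "'p \<Rightarrow> ('x, 'k::field) freealg mat" and comp :: "'p \<Rightarrow> 'p \<Rightarrow> 'p option"
  assumes fin: "finite {p. c p \<noteq> 0}" "finite {q. d q \<noteq> 0}"
    and G: "\<And>p. G p \<in> carrier_mat N N"
    and G_mult: "\<And>p q. c p \<noteq> 0 \<Longrightarrow> d q \<noteq> 0 \<Longrightarrow>
        G p * G q = (case comp p q of Some r \<Rightarrow> G r | None \<Rightarrow> 0\<^sub>m N N)"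
  shows "lin_ext N G (\<lambda>r. \<Sum>p\<in>{p. c p \<noteq> 0}. \<Sum>q\<in>{q. d q \<noteq> 0}. if comp p q = Some r then c p * d q else 0)
    = lin_ext N G c * lin_ext N G d" (is "lin_ext N G ?z = _")
proof (rule eq_matI)
  let ?P = "{p. c p \<noteq> 0}" and ?Q = "{q. d q \<noteq> 0}"
  define C where "C = (\<lambda>(p, q). the (comp p q)) ` (?P \<times> ?Q)"
  have C: "finite C"
    using fin by (simp add: C_def)
  have in_C: "r \<in> C" if "comp p q = Some r" "p \<in> ?P" "q \<in> ?Q" for p q r
    unfolding C_def using that by (intro image_eqI[of _ _ "(p, q)"]) auto
  have supp_z: "{r. ?z r \<noteq> 0} \<subseteq> C"
    using in_C by (auto elim!: sum.not_neutral_contains_not_neutral split: if_splits)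
  fix i j assume "i < dim_row (lin_ext N G c * lin_ext N G d)" "j < dim_col (lin_ext N G c * lin_ext N G d)"
  then have ij: "i < N" "j < N"
    by simp_all
  have "lin_ext N G ?z $$ (i, j)
      = (\<Sum>r\<in>C. \<Sum>p\<in>?P. \<Sum>q\<in>?Q. if comp p q = Some r then fconst (c p * d q) * G r $$ (i, j) else 0)"
    using ij by (simp add: lin_ext_index[OF C supp_z] fconst_sum sum_distrib_right if_distrib[of fconst]
        if_zero_mult cong: if_cong)
  also have "\<dots> = (\<Sum>p\<in>?P. \<Sum>q\<in>?Q. \<Sum>r\<in>C. if comp p q = Some r then fconst (c p * d q) * G r $$ (i, j) else 0)"
    by (subst sum.swap, rule sum.cong[OF refl], rule sum.swap)
  also have "\<dots> = (\<Sum>p\<in>?P. \<Sum>q\<in>?Q. fconst (c p * d q) * (G p * G q) $$ (i, j))"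
  proof (intro sum.cong refl)
    fix p q assume "p \<in> ?P" "q \<in> ?Q"
    then show "(\<Sum>r\<in>C. if comp p q = Some r then fconst (c p * d q) * G r $$ (i, j) else 0)
        = fconst (c p * d q) * (G p * G q) $$ (i, j)"
      using G_mult[of p q] in_C[of p q] C ij by (cases "comp p q") (auto simp: sum.delta')
  qed
  also have "\<dots> = (\<Sum>l\<in>{0..<N}. (\<Sum>p\<in>?P. fconst (c p) * G p $$ (i, l)) * (\<Sum>q\<in>?Q. fconst (d q) * G q $$ (l, j)))"
  proof -
    have "fconst (c p * d q) * (G p * G q) $$ (i, j)
        = (\<Sum>l\<in>{0..<N}. fconst (c p) * G p $$ (i, l) * (fconst (d q) * G q $$ (l, j)))" for p q
      using G ij by (simp add: index_mult_mat_sum[OF G G ij] sum_distrib_left fconst_mult mult.assoc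
          fconst_commute[of "d q"])
    then show ?thesis
      by (simp add: sum_product sum.swap[of _ "{0..<N}"])
  qed
  also have "\<dots> = (lin_ext N G c * lin_ext N G d) $$ (i, j)"
    unfolding index_mult_mat_sum[OF lin_ext_carrier lin_ext_carrier ij]
    using ij by (intro sum.cong) (auto simp: lin_ext_def)
  finally show "lin_ext N G ?z $$ (i, j) = (lin_ext N G c * lin_ext N G d) $$ (i, j)" .
qed simp_all

lemma commuting_mat_rep_endo:
  fixes phi :: "'a \<Rightarrow> 'k::field mat" and Z :: "nat \<Rightarrow> nat \<Rightarrow> 'k"
  assumes rep: "matrix_rep V A s t n blk phi"
    and commutes: "\<And>B p q. B \<in> phi ` A \<union> (\<lambda>v. diag_indicator_mat n (\<lambda>i. blk i = v)) ` V \<Longrightarrow>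
        p < n \<Longrightarrow> q < n \<Longrightarrow> (\<Sum>m<n. B $$ (p, m) * Z m q) = (\<Sum>m<n. Z p m * B $$ (m, q))"
  shows "rep_endo A n blk phi (mat n n (\<lambda>(i, j). Z i j))" (is "rep_endo A n blk phi ?E")
  unfolding rep_endo_def
proof (intro conjI allI impI ballI)
  have E: "?E \<in> carrier_mat n n"
    by simp
  fix i j assume ij: "i < n" "j < n" "blk i \<noteq> blk j"
  then have "blk j \<in> V"
    using rep by (simp add: matrix_rep_def)
  then have "(\<Sum>m<n. (if i = m \<and> blk i = blk j then 1 else 0) * Z m j)
      = (\<Sum>m<n. Z i m * (if m = j \<and> blk m = blk j then 1 else 0))"
    using commutes[of "diag_indicator_mat n (\<lambda>i'. blk i' = blk j)" i j] ij
    by (simp add: diag_indicator_mat_def)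
  then show "?E $$ (i, j) = 0"
    using ij by (simp add: delta_simps)
next
  have E: "?E \<in> carrier_mat n n"
    by simp
  fix a assume a: "a \<in> A"
  then have phi: "phi a \<in> carrier_mat n n"
    using rep by (simp add: matrix_rep_def)
  show "?E * phi a = phi a * ?E"
  proof (rule eq_matI)
    fix i j assume "i < dim_row (phi a * ?E)" "j < dim_col (phi a * ?E)"
    then have ij: "i < n" "j < n"
      using phi by simp_all
    have "(?E * phi a) $$ (i, j) = (\<Sum>m<n. Z i m * phi a $$ (m, j))"
      unfolding index_mult_mat_sum[OF E phi ij] atLeast0LessThan by (rule sum.cong) (auto simp: ij)
    also have "\<dots> = (\<Sum>m<n. phi a $$ (i, m) * Z m j)"
      using commutes[of "phi a" i j] a ij by simp
    also have "\<dots> = (phi a * ?E) $$ (i, j)"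
      unfolding index_mult_mat_sum[OF phi E ij] atLeast0LessThan by (rule sum.cong) (auto simp: ij)
    finally show "(?E * phi a) $$ (i, j) = (phi a * ?E) $$ (i, j)" .
  qed (use phi in simp_all)
qed simp

lemma brick_commutant_is_scalar:
  fixes phi :: "'a \<Rightarrow> 'k::field mat" and Z :: "nat \<Rightarrow> nat \<Rightarrow> 'k"
  assumes rep: "matrix_rep V A s t n blk phi" and brick: "is_brick A n blk phi"
    and commutes: "\<And>B p q. B \<in> phi ` A \<union> (\<lambda>v. diag_indicator_mat n (\<lambda>i. blk i = v)) ` V \<Longrightarrow>
        p < n \<Longrightarrow> q < n \<Longrightarrow> (\<Sum>m<n. B $$ (p, m) * Z m q) = (\<Sum>m<n. Z p m * B $$ (m, q))"
    and pq: "p < n" "q < n"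
  shows "Z p q = (if p = q then Z 0 0 else 0)"
proof -
  obtain c where scalar: "mat n n (\<lambda>(i, j). Z i j) = c \<cdot>\<^sub>m 1\<^sub>m n"
    using brick commuting_mat_rep_endo[OF rep commutes] by (auto simp: is_brick_def)
  have "Z i j = (if i = j then c else 0)" if "i < n" "j < n" for i j
    using arg_cong[OF scalar, of "\<lambda>M. M $$ (i, j)"] that by simp
  then show ?thesis
    using pq by simp
qed

lemma is_path_singleton: "is_path V A s t (v, [a]) \<longleftrightarrow> v \<in> V \<and> a \<in> A \<and> s a = v"
  by (auto simp: is_path_def)

lemma is_path_Cons_Cons:
  "is_path V A s t (v, a # b # bs) \<longleftrightarrow> a \<in> A \<and> s a = t b \<and> is_path V A s t (v, b # bs)"
  by (auto simp: is_path_def)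

locale quiver_extension =
  fixes V :: "'v set" and A :: "'a set" and s t :: "'a \<Rightarrow> 'v"
    and n m :: nat and blk :: "nat \<Rightarrow> 'v" and phi :: "'a \<Rightarrow> 'k::field mat"
    and w w' :: 'v and e' :: 'a and xv :: "nat \<Rightarrow> 'x"
  assumes finite_quiver: "finite_quiver V A s t"
    and rep: "matrix_rep V A s t n blk phi"
    and blk_w: "\<forall>i<n. blk i = w \<longleftrightarrow> i < m" and m: "1 < m" "m \<le> n"
    and new_vertex: "w' \<notin> V" and new_arrow: "e' \<notin> A"
begin

abbreviation "V' \<equiv> insert w' V"
abbreviation "A' \<equiv> insert e' A"
abbreviation "s' \<equiv> s(e' := w')"
abbreviation "t' \<equiv> t(e' := w)"
abbreviation "kQ' \<equiv> path_algebra TYPE('k) V' A' s' t'"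
abbreviation "g \<equiv> g_hom n m xv blk phi w' e'"
abbreviation "path_mat \<equiv> g_path n m xv blk phi w' e'"
abbreviation "arrow_mat \<equiv> g_arrow n m xv phi e'"
abbreviation "arrows_mat as \<equiv> foldr (\<lambda>a B. arrow_mat a * B) as (1\<^sub>m (Suc n))"

definition vertex_of :: "nat \<Rightarrow> 'v" where
  "vertex_of i = (if i < n then blk i else w')"

lemma blk_in_V: "i < n \<Longrightarrow> blk i \<in> V"
  using rep by (simp add: matrix_rep_def)

lemma vertex_of_in_V: "vertex_of i \<in> V \<longleftrightarrow> i < n"
  using new_vertex by (simp add: vertex_of_def blk_in_V)

lemma vertex_of_in_V': "vertex_of i \<in> V'"
  by (simp add: vertex_of_def blk_in_V)

lemma g_vertex_eq: "v \<in> V' \<Longrightarrow> g_vertex n blk w' v = diag_indicator_mat (Suc n) (\<lambda>i. vertex_of i = v)"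
  using new_vertex blk_in_V by (intro eq_matI) (auto simp: g_vertex_def diag_indicator_mat_def vertex_of_def)

lemma arrow_mat_carrier [simp]: "arrow_mat a \<in> carrier_mat (Suc n) (Suc n)"
  by (simp add: g_arrow_def embed_mat_def)

lemma arrow_mat_block: "a \<in> A' \<Longrightarrow> in_block (Suc n) vertex_of (t' a) (s' a) (arrow_mat a)"
proof (cases "a = e'")
  case True
  then show ?thesis
    using blk_w m by (auto simp: in_block_def g_arrow_def vertex_of_def Xcol_def)
next
  case False
  assume "a \<in> A'"
  with False have a: "a \<in> A"
    by simp
  have "phi a $$ (i, j) = 0" if "i < n" "j < n" "blk i \<noteq> t a \<or> blk j \<noteq> s a" for i j
    using rep a that by (auto simp: matrix_rep_def)
  with False show ?thesis
    by (auto simp: in_block_def g_arrow_def embed_mat_def vertex_of_def)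
qed

lemma arrows_mat_carrier: "arrows_mat as \<in> carrier_mat (Suc n) (Suc n)"
  by (induction as) (simp_all add: mult_carrier_mat[OF arrow_mat_carrier])

lemma arrows_mat_append: "arrows_mat (as @ bs) = arrows_mat as * arrows_mat bs"
proof (induction as)
  case Nil
  show ?case
    by (simp add: left_mult_one_mat[OF arrows_mat_carrier])
next
  case (Cons a as)
  then show ?case
    using arrows_mat_carrier
    by (simp add: assoc_mult_mat[of _ "Suc n" "Suc n" _ "Suc n" _ "Suc n"])
qed

lemma arrows_mat_block:
  "as \<noteq> [] \<Longrightarrow> is_path V' A' s' t' (v, as) \<Longrightarrow> in_block (Suc n) vertex_of (t' (hd as)) v (arrows_mat as)"
proof (induction as)
  case (Cons a as)
  note path = Cons.prems(2) and IH = Cons.IH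
  have a: "a \<in> A'"
    using path by (simp add: is_path_def)
  show ?case
  proof (cases as)
    case Nil
    then have "s' a = v"
      using path by (simp only: is_path_singleton)
    then show ?thesis
      using arrow_mat_block[OF a] Nil by (simp add: right_mult_one_mat[OF arrow_mat_carrier])
  next
    case (Cons b bs)
    then have tail: "is_path V' A' s' t' (v, as)" and "s' a = t' b"
      using path by (simp_all only: is_path_Cons_Cons)
    then have "in_block (Suc n) vertex_of (s' a) v (arrows_mat as)"
      using IH[OF _ tail] Cons by simp
    then show ?thesis
      using in_block_mult[OF arrow_mat_block[OF a]] by simp
  qed
qed simp

lemma path_mat_carrier [simp]: "path_mat p \<in> carrier_mat (Suc n) (Suc n)"
  using arrows_mat_carrier by (simp add: g_path_def g_vertex_def)

lemma path_mat_block: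
  assumes "is_path V' A' s' t' p"
  shows "in_block (Suc n) vertex_of (path_target t' p) (fst p) (path_mat p)"
proof (cases "snd p = []")
  case True
  then have "fst p \<in> V'"
    using assms by (simp add: is_path_def)
  then show ?thesis
    using True in_block_diag_indicator
    by (simp add: g_path_def path_target_def g_vertex_eq)
next
  case False
  then show ?thesis
    using arrows_mat_block[of "snd p" "fst p"] assms
    by (simp add: g_path_def path_target_def)
qed

lemma path_mat_mult:
  assumes p: "is_path V' A' s' t' p" and q: "is_path V' A' s' t' q"
  shows "path_mat p * path_mat q
    = (case path_comp t' p q of Some r \<Rightarrow> path_mat r | None \<Rightarrow> 0\<^sub>m (Suc n) (Suc n))"
proof (cases "fst p = path_target t' q")
  case composable: True
  have V': "fst p \<in> V'" "fst q \<in> V'"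
    using p q by (simp_all add: is_path_def)
  consider "snd p = []" | "snd q = []" | "snd p \<noteq> []" "snd q \<noteq> []"
    by blast
  then show ?thesis
  proof cases
    case 1
    then show ?thesis
      using composable diag_indicator_mult_block[OF path_mat_block[OF q]] V'
      by (simp add: path_comp_def path_source_def g_path_def g_vertex_eq)
  next
    case 2
    then have "fst q = fst p"
      using composable by (simp add: path_target_def)
    then show ?thesis
      using 2 block_mult_diag_indicator[OF path_mat_block[OF p]] V' composable
      by (simp add: path_comp_def path_source_def g_path_def g_vertex_eq path_target_def)
  next
    case 3
    then show ?thesis
      using composable by (simp add: path_comp_def path_source_def g_path_def arrows_mat_append[symmetric])
  qed
next
  case False
  then show ?thesis
    using in_block_mult_zero[OF path_mat_block[OF p] path_mat_block[OF q]]
    by (simp add: path_comp_def path_source_def)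
qed

lemma g_eq_lin_ext: "g = lin_ext (Suc n) path_mat"
  by (intro ext eq_matI) (auto simp: g_hom_def lin_ext_def)

lemma carrier_kQ':
  "c \<in> carrier kQ' \<longleftrightarrow> finite {p. c p \<noteq> 0} \<and> (\<forall>p. c p \<noteq> 0 \<longrightarrow> is_path V' A' s' t' p)"
  by (auto simp: path_algebra_def supp_fun_def)

lemma path_indicator_in_carrier: "is_path V' A' s' t' p0 \<Longrightarrow> (\<lambda>p. if p = p0 then 1 else 0) \<in> carrier kQ'"
  by (simp add: carrier_kQ')

lemma vertex_sum_in_carrier:
  assumes "W \<subseteq> V'"
  shows "(\<lambda>p. if snd p = [] \<and> fst p \<in> W then c else 0) \<in> carrier kQ'"
proof -
  have "finite W"
    using assms finite_quiver finite_subset by (auto simp: finite_quiver_def)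
  moreover have "{p. (if snd p = [] \<and> fst p \<in> W then c else 0) \<noteq> 0} \<subseteq> (\<lambda>v. (v, [])) ` W"
    by (auto split: if_splits)
  ultimately show ?thesis
    using assms by (auto simp: carrier_kQ' is_path_def intro: finite_subset split: if_splits)
qed

lemma g_vertex_sum:
  assumes W: "W \<subseteq> V'"
  shows "g (\<lambda>p. if snd p = [] \<and> fst p \<in> W then c else 0)
    = mat (Suc n) (Suc n) (\<lambda>(i, j). if i = j \<and> vertex_of i \<in> W then fconst c else 0)"
proof (rule eq_matI)
  have "finite W"
    using W finite_quiver finite_subset by (auto simp: finite_quiver_def)
  fix i j assume "i < dim_row (mat (Suc n) (Suc n) (\<lambda>(i, j). if i = j \<and> vertex_of i \<in> W then fconst c else 0))"
    "j < dim_col (mat (Suc n) (Suc n) (\<lambda>(i, j). if i = j \<and> vertex_of i \<in> W then fconst c else 0))"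
  then have ij: "i < Suc n" "j < Suc n"
    by simp_all
  have "g (\<lambda>p. if snd p = [] \<and> fst p \<in> W then c else 0) $$ (i, j)
      = (\<Sum>p\<in>(\<lambda>v. (v, [])) ` W. fconst (if snd p = [] \<and> fst p \<in> W then c else 0) * path_mat p $$ (i, j))"
    unfolding g_eq_lin_ext using \<open>finite W\<close> ij by (intro lin_ext_index) (auto split: if_splits)
  also have "\<dots> = (\<Sum>v\<in>W. fconst c * diag_indicator_mat (Suc n) (\<lambda>i. vertex_of i = v) $$ (i, j))"
    using W by (subst sum.reindex) (auto simp: inj_on_def g_path_def g_vertex_eq intro!: sum.cong)
  also have "\<dots> = (\<Sum>v\<in>W. if v = vertex_of i then (if i = j then fconst c else 0) else 0)"
    using ij by (intro sum.cong) (auto simp: diag_indicator_mat_def)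
  also have "\<dots> = (if i = j \<and> vertex_of i \<in> W then fconst c else 0)"
    using \<open>finite W\<close> by simp
  finally show "g (\<lambda>p. if snd p = [] \<and> fst p \<in> W then c else 0) $$ (i, j)
      = mat (Suc n) (Suc n) (\<lambda>(i, j). if i = j \<and> vertex_of i \<in> W then fconst c else 0) $$ (i, j)"
    using ij by simp
qed (simp_all add: g_hom_def)

lemma g_ring_hom: "g \<in> ring_hom kQ' (ring_mat TYPE(('x, 'k) freealg) (n + 1) ())"
proof (rule ring_hom_memI)
  fix x y assume x: "x \<in> carrier kQ'" and y: "y \<in> carrier kQ'"
  have "g (x \<otimes>\<^bsub>kQ'\<^esub> y) = lin_ext (Suc n) path_mat (\<lambda>r. \<Sum>p\<in>{p. x p \<noteq> 0}. \<Sum>q\<in>{q. y q \<noteq> 0}.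
      if path_comp t' p q = Some r then x p * y q else 0)"
    by (simp add: g_eq_lin_ext path_algebra_def supp_fun_def)
  also have "\<dots> = g x * g y"
    unfolding g_eq_lin_ext
    by (rule lin_ext_convolution) (use x y in \<open>auto simp: carrier_kQ' path_mat_mult\<close>)
  finally show "g (x \<otimes>\<^bsub>kQ'\<^esub> y) = g x \<otimes>\<^bsub>ring_mat TYPE(('x, 'k) freealg) (n + 1) ()\<^esub> g y"
    by (simp add: ring_mat_simps)
  show "g (x \<oplus>\<^bsub>kQ'\<^esub> y) = g x \<oplus>\<^bsub>ring_mat TYPE(('x, 'k) freealg) (n + 1) ()\<^esub> g y"
    using x y unfolding g_eq_lin_ext
    by (simp add: ring_mat_simps path_algebra_def supp_fun_def lin_ext_add)
next
  have "g \<one>\<^bsub>kQ'\<^esub> = 1\<^sub>m (Suc n)"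
    using g_vertex_sum[of V' 1] vertex_of_in_V' by (auto intro!: eq_matI simp: path_algebra_def)
  then show "g \<one>\<^bsub>kQ'\<^esub> = \<one>\<^bsub>ring_mat TYPE(('x, 'k) freealg) (n + 1) ()\<^esub>"
    by (simp add: ring_mat_simps)
qed (simp add: ring_mat_simps g_hom_def)

abbreviation generators :: "'k mat set" where
  "generators \<equiv> phi ` A \<union> (\<lambda>v. diag_indicator_mat n (\<lambda>i. blk i = v)) ` V"

lemma path_mat_in_image: "is_path V' A' s' t' p \<Longrightarrow> path_mat p \<in> g ` carrier kQ'"
  using lin_ext_indicator[where G = path_mat, OF path_mat_carrier, of p]
  by (intro image_eqI[of _ _ "\<lambda>q. if q = p then 1 else 0"])
    (simp_all add: g_eq_lin_ext path_indicator_in_carrier)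

lemma scalar_in_image: "fconst c \<cdot>\<^sub>m 1\<^sub>m (Suc n) \<in> g ` carrier kQ'"
proof (rule image_eqI)
  show "fconst c \<cdot>\<^sub>m 1\<^sub>m (Suc n) = g (\<lambda>p. if snd p = [] \<and> fst p \<in> V' then c else 0)"
    unfolding g_vertex_sum[OF subset_refl] using vertex_of_in_V' by (intro eq_matI) auto
qed (rule vertex_sum_in_carrier[OF subset_refl])

lemma embed_one_in_image: "embed_mat n (1\<^sub>m n) \<in> g ` carrier kQ'"
proof (rule image_eqI)
  show "embed_mat n (1\<^sub>m n) = g (\<lambda>p. if snd p = [] \<and> fst p \<in> V then 1 else 0)"
    unfolding g_vertex_sum[OF subset_insertI] by (intro eq_matI) (auto simp: embed_mat_def vertex_of_in_V)
qed (rule vertex_sum_in_carrier[OF subset_insertI])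

lemma embed_generator_in_image:
  assumes "B \<in> generators"
  shows "embed_mat n B \<in> g ` carrier kQ'"
  using assms
proof
  assume "B \<in> phi ` A"
  then obtain a where a: "a \<in> A" "B = phi a"
    by blast
  then have "is_path V' A' s' t' (s a, [a])"
    using finite_quiver new_arrow by (auto simp: is_path_singleton finite_quiver_def)
  moreover have "path_mat (s a, [a]) = embed_mat n B"
    using a new_arrow by (auto simp: g_path_def g_arrow_def)
  ultimately show ?thesis
    using path_mat_in_image by metis
next
  assume "B \<in> (\<lambda>v. diag_indicator_mat n (\<lambda>i. blk i = v)) ` V"
  then obtain v where v: "v \<in> V" "B = diag_indicator_mat n (\<lambda>i. blk i = v)"
    by blast
  then have "path_mat (v, []) = embed_mat n B"
    using new_vertex
    by (intro eq_matI) (auto simp: g_path_def g_vertex_eq embed_mat_def diag_indicator_mat_def vertex_of_def)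
  then show ?thesis
    using path_mat_in_image[of "(v, [])"] v by (simp add: is_path_def)
qed

lemma corner_in_image: "mat_unit (Suc n) n n \<in> g ` carrier kQ'"
proof -
  have "path_mat (w', []) = mat_unit (Suc n) n n"
    using new_vertex blk_in_V
    by (intro eq_matI) (auto simp: g_path_def g_vertex_eq diag_indicator_mat_def single_entry_mat_def vertex_of_def)
  then show ?thesis
    using path_mat_in_image[of "(w', [])"] by (simp add: is_path_def)
qed

lemma Xcol_mat_in_image: "Xcol_mat n m xv \<in> g ` carrier kQ'"
proof -
  have "path_mat (w', [e']) = Xcol_mat n m xv"
    by (simp add: g_path_def g_arrow_def Xcol_mat_def)
  then show ?thesis
    using path_mat_in_image[of "(w', [e'])"] by (simp add: is_path_singleton)
qed

theorem g_ring_epi: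
  assumes brick: "is_brick A n blk phi" and xv: "bij_betw xv {1..<m} (UNIV :: 'x set)"
  shows "ring_epi kQ' (ring_mat TYPE(('x, 'k) freealg) (n + 1) ()) g TYPE('c)"
  unfolding ring_epi_def
proof (intro conjI allI impI ballI)
  show "g \<in> ring_hom kQ' (ring_mat TYPE(('x, 'k) freealg) (n + 1) ())"
    by (rule g_ring_hom)
  fix T :: "'c ring" and \<rho>1 \<rho>2 M
  assume T: "ring T"
    and hom: "\<rho>1 \<in> ring_hom (ring_mat TYPE(('x, 'k) freealg) (n + 1) ()) T"
      "\<rho>2 \<in> ring_hom (ring_mat TYPE(('x, 'k) freealg) (n + 1) ()) T"
    and agree: "\<forall>x\<in>carrier kQ'. \<rho>1 (g x) = \<rho>2 (g x)"
    and M: "M \<in> carrier (ring_mat TYPE(('x, 'k) freealg) (n + 1) ())"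
  have agree_image: "\<rho>1 B = \<rho>2 B" if "B \<in> g ` carrier kQ'" for B
    using agree that by blast
  have variables: "\<exists>i\<in>{1..<m}. xv i = x" for x
    using xv by (metis UNIV_I bij_betw_def imageE)
  have "finite generators"
    using finite_quiver by (simp add: finite_quiver_def)
  then have "generator_agreement T n \<rho>1 \<rho>2 m xv generators"
    by (intro generator_agreement.intro mat_hom_pair.intro generator_agreement_axioms.intro)
      (use T hom m variables brick_commutant_is_scalar[OF rep brick]
        agree_image[OF scalar_in_image] agree_image[OF embed_generator_in_image]
        agree_image[OF embed_one_in_image] agree_image[OF corner_in_image]
        agree_image[OF Xcol_mat_in_image] in auto)
  then show "\<rho>1 M = \<rho>2 M"
    using M by (simp add: generator_agreement.agree_everywhere ring_mat_simps)
qed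

end

theorem mainTheorem14:
  fixes V :: "'v set" and A :: "'a set" and s t :: "'a \<Rightarrow> 'v"
    and n m :: nat and blk :: "nat \<Rightarrow> 'v" and phi :: "'a \<Rightarrow> 'k::field mat"
    and w w' :: 'v and e' :: 'a and xv :: "nat \<Rightarrow> 'x::finite"
  assumes "alg_closed TYPE('k)"
    and "finite_quiver V A s t" and "acyclic_quiver V A s t"
    and "matrix_rep V A s t n blk phi" and "is_brick A n blk phi"
    and "w \<in> V" and "\<forall>i<n. blk i = w \<longleftrightarrow> i < m" and "m > 1" and "m \<le> n"
    and "w' \<notin> V" and "e' \<notin> A"
    and "bij_betw xv {1..<m} (UNIV :: 'x set)"
  shows "ring_epi
           (path_algebra TYPE('k) (insert w' V) (insert e' A) (s(e' := w')) (t(e' := w)))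
           (ring_mat TYPE(('x, 'k) freealg) (n+1) ())
           (g_hom n m xv blk phi w' e')
           TYPE('c)"
proof -
  interpret quiver_extension V A s t n m blk phi w w' e' xv
    using assms by unfold_locales auto
  show ?thesis
    using g_ring_epi assms by blast
qed

end
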